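(* Let $I\subseteq[n]$ be such that $\dim F_I=n-|I|$. For $b\in\mathbb R_{>0}$ let $S_b=\{\gamma\in\Phi\mid c_i(\gamma)=m_i/b\ \text{for all } i\in I\}$, and let $d$ be the maximal positive number such that $S_d\neq\emptyset$. Then: (1) $S_d$ has a minimum $\alpha$ in the root poset, and $\{\alpha\}\cup(\Pi\setminus\Pi_I)$ is a root basis of $\overline{\Phi(V_I)}$; (2) $\Phi(V_I)=\overline{\Phi(V_I)}$ if and only if $d=1$. In particular, if $\gcd\{m_i\mid i\in I\}=1$, then $\Phi(V_I)=\overline{\Phi(V_I)}$.
   Context: $\Phi$ is a finite irreducible crystallographic root system of rank $n$ with inner product $(-,-)$, basis $\Pi=\{\alpha_1,\dots,\alpha_n\}$, positive roots $\Phi^+$, highest root $\theta=\sum_i m_i\alpha_i$, Weyl group $W$. For $\beta\in\Phi$, $\beta=\sum_i c_i(\beta)\alpha_i$. The root poset is $\Phi^+$ with $\beta\ge\gamma$ iff $\beta-\gamma$ is a nonnegative integer combination of simple roots. $\breve\omega_i$ is the fundamental coweight ($(\alpha_j,\breve\omega_i)=\delta_{ij}$). For $I\subseteq[n]$: $\Pi_I=\{\alpha_i\mid i\in I\}$, $V_I=\{\beta\in\Phi^+\mid(\beta,\breve\omega_i)=m_i\ \forall i\in I\}$, $F_I=\operatorname{conv}(V_I)$ (a face of $\operatorname{conv}(\Phi)$). For $\Gamma\subseteq\Phi$, $\Phi(\Gamma)=\{w(\gamma)\mid w\in W\langle\Gamma\rangle,\gamma\in\Gamma\}$ is the root subsystem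 generated by $\Gamma$ ($W\langle\Gamma\rangle$ generated by reflections $s_\gamma$, $\gamma\in\Gamma$), and for a subsystem $\Phi'$, $\overline{\Phi'}=\operatorname{span}_{\mathbb R}\Phi'\cap\Phi$ is its parabolic closure. A root basis of a root subsystem is a basis of it in the sense of root systems. *)

theory Defs
  imports "HOL-Analysis.Analysis"
begin

definition reflect :: "'a::euclidean_space \<Rightarrow> 'a \<Rightarrow> 'a" where
  "reflect a x = x - (2 * (x \<bullet> a) / (a \<bullet> a)) *\<^sub>R a"

definition crystallographic_root_system :: "'a::euclidean_space set \<Rightarrow> bool" where
  "crystallographic_root_system \<Phi> \<longleftrightarrow>
     finite \<Phi> \<and> 0 \<notin> \<Phi> \<and> span \<Phi> = UNIV \<and>
     (\<forall>a\<in>\<Phi>. \<forall>b\<in>\<Phi>. reflect a b \<in> \<Phi>) \<and>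
     (\<forall>a\<in>\<Phi>. \<forall>b\<in>\<Phi>. 2 * (b \<bullet> a) / (a \<bullet> a) \<in> \<int>) \<and>
     (\<forall>a\<in>\<Phi>. \<forall>c::real. c *\<^sub>R a \<in> \<Phi> \<longrightarrow> c = 1 \<or> c = -1)"

definition irreducible_root_system :: "'a::euclidean_space set \<Rightarrow> bool" where
  "irreducible_root_system \<Phi> \<longleftrightarrow>
     \<not> (\<exists>A B. A \<noteq> {} \<and> B \<noteq> {} \<and> A \<union> B = \<Phi> \<and> A \<inter> B = {} \<and>
            (\<forall>a\<in>A. \<forall>b\<in>B. a \<bullet> b = 0))"

definition is_root_basis :: "'a::euclidean_space set \<Rightarrow> 'a set \<Rightarrow> bool" where
  "is_root_basis \<Psi> B \<longleftrightarrow>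
     B \<subseteq> \<Psi> \<and> independent B \<and>
     (\<forall>\<beta>\<in>\<Psi>. \<exists>c. (\<forall>b\<in>B. c b \<in> \<int>) \<and> ((\<forall>b\<in>B. c b \<ge> 0) \<or> (\<forall>b\<in>B. c b \<le> 0)) \<and>
              \<beta> = (\<Sum>b\<in>B. c b *\<^sub>R b))"

definition simple_roots :: "'a::euclidean_space set \<Rightarrow> (nat \<Rightarrow> 'a) \<Rightarrow> nat \<Rightarrow> bool" where
  "simple_roots \<Phi> \<alpha> n \<longleftrightarrow> n = DIM('a) \<and> inj_on \<alpha> {1..n} \<and> is_root_basis \<Phi> (\<alpha> ` {1..n})"

definition coeff :: "(nat \<Rightarrow> 'a::euclidean_space) \<Rightarrow> nat \<Rightarrow> 'a \<Rightarrow> nat \<Rightarrow> real" where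
  "coeff \<alpha> n \<beta> = (THE c. (\<forall>j. j \<notin> {1..n} \<longrightarrow> c j = 0) \<and> \<beta> = (\<Sum>j=1..n. c j *\<^sub>R \<alpha> j))"

definition coweight :: "(nat \<Rightarrow> 'a::euclidean_space) \<Rightarrow> nat \<Rightarrow> nat \<Rightarrow> 'a" where
  "coweight \<alpha> n i = (THE w. \<forall>j\<in>{1..n}. \<alpha> j \<bullet> w = (if j = i then 1 else 0))"

definition pos_roots :: "'a::euclidean_space set \<Rightarrow> (nat \<Rightarrow> 'a) \<Rightarrow> nat \<Rightarrow> 'a set" where
  "pos_roots \<Phi> \<alpha> n = {\<beta>\<in>\<Phi>. \<forall>i\<in>{1..n}. coeff \<alpha> n \<beta> i \<ge> 0}"

definition root_le :: "(nat \<Rightarrow> 'a::euclidean_space) \<Rightarrow> nat \<Rightarrow> 'a \<Rightarrow> 'a \<Rightarrow> bool" where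
  "root_le \<alpha> n \<beta> \<gamma> \<longleftrightarrow> (\<forall>i\<in>{1..n}. coeff \<alpha> n \<gamma> i - coeff \<alpha> n \<beta> i \<in> \<nat>)"

definition highest_root :: "'a::euclidean_space set \<Rightarrow> (nat \<Rightarrow> 'a) \<Rightarrow> nat \<Rightarrow> 'a" where
  "highest_root \<Phi> \<alpha> n =
     (THE \<theta>. \<theta> \<in> pos_roots \<Phi> \<alpha> n \<and> (\<forall>\<beta>\<in>pos_roots \<Phi> \<alpha> n. root_le \<alpha> n \<beta> \<theta>))"

definition hmult :: "'a::euclidean_space set \<Rightarrow> (nat \<Rightarrow> 'a) \<Rightarrow> nat \<Rightarrow> nat \<Rightarrow> real" where
  "hmult \<Phi> \<alpha> n i = coeff \<alpha> n (highest_root \<Phi> \<alpha> n) i"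

definition face_vertices :: "'a::euclidean_space set \<Rightarrow> (nat \<Rightarrow> 'a) \<Rightarrow> nat \<Rightarrow> nat set \<Rightarrow> 'a set" where
  "face_vertices \<Phi> \<alpha> n I =
     {\<beta>\<in>pos_roots \<Phi> \<alpha> n. \<forall>i\<in>I. \<beta> \<bullet> coweight \<alpha> n i = hmult \<Phi> \<alpha> n i}"

inductive_set weyl_group :: "'a::euclidean_space set \<Rightarrow> ('a \<Rightarrow> 'a) set" for \<Gamma> where
  weyl_id: "id \<in> weyl_group \<Gamma>"
| weyl_step: "w \<in> weyl_group \<Gamma> \<Longrightarrow> \<gamma> \<in> \<Gamma> \<Longrightarrow> reflect \<gamma> \<circ> w \<in> weyl_group \<Gamma>"

definition gen_subsystem :: "'a::euclidean_space set \<Rightarrow> 'a set" where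
  "gen_subsystem \<Gamma> = {w \<gamma> | w \<gamma>. w \<in> weyl_group \<Gamma> \<and> \<gamma> \<in> \<Gamma>}"

definition par_closure :: "'a::euclidean_space set \<Rightarrow> 'a set \<Rightarrow> 'a set" where
  "par_closure \<Phi> \<Psi> = span \<Psi> \<inter> \<Phi>"

definition S_set :: "'a::euclidean_space set \<Rightarrow> (nat \<Rightarrow> 'a) \<Rightarrow> nat \<Rightarrow> nat set \<Rightarrow> real \<Rightarrow> 'a set" where
  "S_set \<Phi> \<alpha> n I b = {\<gamma>\<in>\<Phi>. \<forall>i\<in>I. coeff \<alpha> n \<gamma> i = hmult \<Phi> \<alpha> n i / b}"

end

theory Submission
  imports Defs
begin

text \<open>Fix \<open>i\<^sub>0 \<in> I\<close> and let the level of a vector be its \<open>i\<^sub>0\<close>-th coordinate divided by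
  \<open>m\<^sub>i\<^sub>0\<close>. Since \<open>dim F\<^sub>I = n - |I|\<close>, the simple roots outside \<open>\<Pi>\<^sub>I\<close> lie in \<open>span V\<^sub>I\<close>, and on
  this span the coordinates indexed by \<open>I\<close> are the level times those of the highest root. So
  \<open>S\<^sub>b\<close> is the set of roots of level \<open>1/b\<close> in \<open>span V\<^sub>I\<close>, and maximality of \<open>d\<close> says that no
  positive root of \<open>span V\<^sub>I\<close> has level strictly between \<open>0\<close> and \<open>1/d\<close>.

  (1) The indecomposable positive roots of the parabolic subsystem \<open>span V\<^sub>I \<inter> \<Phi>\<close> are pairwise
  obtuse, hence a root basis of it. This basis contains \<open>\<Pi> - \<Pi>\<^sub>I\<close> and has at most
  \<open>n - |I| + 1\<close> elements, so it is \<open>\<Pi> - \<Pi>\<^sub>I\<close> plus one root \<open>\<beta>\<close>. Every element of \<open>S\<^sub>d\<close> is a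
  positive integer multiple of \<open>\<beta>\<close> plus a nonnegative combination of \<open>\<Pi> - \<Pi>\<^sub>I\<close>; comparing
  levels forces the multiple to be \<open>1\<close> and \<open>\<beta> = min S\<^sub>d\<close>.

  (2) A reflection in a vertex changes the level by a Cartan integer, so the level is integral
  on \<open>\<Phi>(V\<^sub>I)\<close>, whereas it is \<open>1/d\<close> on \<open>S\<^sub>d \<subseteq> span V\<^sub>I \<inter> \<Phi>\<close>; hence equality forces
  \<open>d = 1\<close>. Conversely, for \<open>d = 1\<close> the roots of \<open>span V\<^sub>I\<close> have level \<open>0\<close> or \<open>\<plusminus>1\<close>; those
  of level \<open>\<plusminus>1\<close> are \<open>\<plusminus>\<close>vertices, and a suitable vertex reflects a root of level \<open>0\<close> to one
  of level \<open>\<plusminus>1\<close>.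

  If \<open>gcd m\<^sub>i = 1\<close>, the integrality of the coordinates \<open>m\<^sub>i/d\<close> of an element of \<open>S\<^sub>d\<close> gives
  \<open>1/d \<in> \<int>\<close>, so \<open>d = 1\<close>.\<close>

text \<open>Simplifying with \<open>One_nat_def\<close> would turn \<open>{1..n}\<close> into \<open>{Suc 0..n}\<close>, which no longer
  matches the premises \<open>i \<in> {1..n}\<close> of the conditional rewrite rules below.\<close>
declare One_nat_def [simp del]

lemma Ints_mult_Gcd:
  fixes r :: real
  assumes "finite A" and "\<And>a. a \<in> A \<Longrightarrow> r * of_int a \<in> \<int>"
  shows "r * of_int (Gcd A) \<in> \<int>"
  using assms
proof (induction A rule: finite_induct)
  case empty
  then show ?case by simp
next
  case (insert a A)
  obtain u v where uv: "u * a + v * Gcd A = gcd a (Gcd A)"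
    using bezout_int by blast
  have "r * of_int (Gcd (insert a A)) = of_int u * (r * of_int a) + of_int v * (r * of_int (Gcd A))"
    using uv[symmetric] by (simp add: algebra_simps)
  also have "\<dots> \<in> \<int>"
  proof -
    have "r * of_int a \<in> \<int>" "r * of_int (Gcd A) \<in> \<int>"
      using insert by auto
    then show ?thesis by (intro Ints_add Ints_mult[OF Ints_of_int])
  qed
  finally show ?case .
qed

lemma Nats_sum: "(\<And>x. x \<in> A \<Longrightarrow> f x \<in> \<nat>) \<Longrightarrow> sum f A \<in> (\<nat> :: 'a::semiring_1 set)"
  by (induction A rule: infinite_finite_induct) auto

lemma Ints_eq_1_if_pos_le_1: "(r::real) \<in> \<int> \<Longrightarrow> 0 < r \<Longrightarrow> r \<le> 1 \<Longrightarrow> r = 1"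
  by (elim Ints_cases) auto

lemma obtuse_combinations_eq_0:
  fixes P N :: "'a::real_inner set"
  assumes "finite P" and "finite N"
    and obtuse: "\<And>p q. p \<in> P \<Longrightarrow> q \<in> N \<Longrightarrow> p \<bullet> q \<le> 0"
    and a: "\<And>p. p \<in> P \<Longrightarrow> a p \<ge> 0" and b: "\<And>q. q \<in> N \<Longrightarrow> b q \<ge> 0"
    and eq: "(\<Sum>p\<in>P. a p *\<^sub>R p) = (\<Sum>q\<in>N. b q *\<^sub>R q)"
  shows "(\<Sum>p\<in>P. a p *\<^sub>R p) = 0"
proof -
  define s where "s = (\<Sum>p\<in>P. a p *\<^sub>R p)"
  have "s \<bullet> s = (\<Sum>p\<in>P. a p *\<^sub>R p) \<bullet> (\<Sum>q\<in>N. b q *\<^sub>R q)"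
    using eq by (simp add: s_def)
  also have "\<dots> = (\<Sum>p\<in>P. \<Sum>q\<in>N. (a p *\<^sub>R p) \<bullet> (b q *\<^sub>R q))"
    by (simp only: inner_sum_left inner_sum_right) (rule sum.swap)
  also have "\<dots> = (\<Sum>p\<in>P. \<Sum>q\<in>N. (a p * b q) * (p \<bullet> q))"
    by (intro sum.cong refl) simp
  also have "\<dots> \<le> 0"
  proof (intro sum_nonpos)
    fix p q assume "p \<in> P" "q \<in> N"
    have "a p * b q \<ge> 0" using a[OF \<open>p \<in> P\<close>] b[OF \<open>q \<in> N\<close>] by (rule mult_nonneg_nonneg)
    then show "(a p * b q) * (p \<bullet> q) \<le> 0"
      using obtuse[OF \<open>p \<in> P\<close> \<open>q \<in> N\<close>] by (rule mult_nonneg_nonpos)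
  qed
  finally have "s \<bullet> s = 0" using inner_ge_zero[of s] by linarith
  then show ?thesis by (simp add: s_def)
qed

text \<open>In a vanishing combination of such vectors, the part with positive coefficients equals the
  part with negative ones, so both vanish; positivity of \<open>f\<close> then shows that both are empty.\<close>
lemma independent_if_pairwise_obtuse:
  fixes D :: "'a::real_inner set" and f :: "'a \<Rightarrow> real"
  assumes "finite D" and "linear f" and f_pos: "\<And>x. x \<in> D \<Longrightarrow> f x > 0"
    and obtuse: "\<And>x y. x \<in> D \<Longrightarrow> y \<in> D \<Longrightarrow> x \<noteq> y \<Longrightarrow> x \<bullet> y \<le> 0"
  shows "independent D"
proof (rule independent_if_scalars_zero[OF \<open>finite D\<close>])
  fix u v assume zero: "(\<Sum>v\<in>D. u v *\<^sub>R v) = 0" and "v \<in> D"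
  define Pos where "Pos = {v\<in>D. u v > 0}"
  define Neg where "Neg = {v\<in>D. u v < 0}"
  have fin: "finite Pos" "finite Neg" and disj: "Pos \<inter> Neg = {}"
    using \<open>finite D\<close> by (auto simp: Pos_def Neg_def)
  have "(\<Sum>v\<in>D. u v *\<^sub>R v) = (\<Sum>v\<in>Pos \<union> Neg. u v *\<^sub>R v)"
    using \<open>finite D\<close> by (intro sum.mono_neutral_right) (auto simp: Pos_def Neg_def)
  also have "\<dots> = (\<Sum>v\<in>Pos. u v *\<^sub>R v) + (\<Sum>v\<in>Neg. u v *\<^sub>R v)"
    using fin disj by (rule sum.union_disjoint)
  finally have balance: "(\<Sum>v\<in>Pos. u v *\<^sub>R v) = (\<Sum>v\<in>Neg. (- u v) *\<^sub>R v)"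
    using zero by (simp add: sum_negf eq_neg_iff_add_eq_0)
  have "p \<bullet> q \<le> 0" if "p \<in> Pos" "q \<in> Neg" for p q
    using that obtuse[of p q] by (force simp: Pos_def Neg_def)
  then have pos0: "(\<Sum>v\<in>Pos. u v *\<^sub>R v) = 0"
    by (rule obtuse_combinations_eq_0[OF fin _ _ _ balance]) (auto simp: Pos_def Neg_def)
  have empty: "A = {}" if "A \<subseteq> D" "\<forall>v\<in>A. c v > 0" "(\<Sum>v\<in>A. c v *\<^sub>R v) = 0" for A c
  proof (rule ccontr)
    assume "A \<noteq> {}"
    moreover have "finite A" using that(1) \<open>finite D\<close> by (rule finite_subset)
    ultimately have "0 < (\<Sum>v\<in>A. c v * f v)"
      using that f_pos by (intro sum_pos) (auto intro!: mult_pos_pos)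
    also have "\<dots> = f (\<Sum>v\<in>A. c v *\<^sub>R v)"
      by (simp add: linear_sum[OF \<open>linear f\<close>] linear_scale[OF \<open>linear f\<close>])
    finally show False using that(3) linear_0[OF \<open>linear f\<close>] by simp
  qed
  have "Pos \<subseteq> D" "\<forall>v\<in>Pos. u v > 0"
    by (auto simp: Pos_def)
  then have "Pos = {}" using pos0 by (rule empty)
  have "Neg \<subseteq> D" "\<forall>v\<in>Neg. - u v > 0"
    by (auto simp: Neg_def)
  moreover have "(\<Sum>v\<in>Neg. (- u v) *\<^sub>R v) = 0"
    using balance pos0 by simp
  ultimately have "Neg = {}" by (rule empty)
  show "u v = 0"
    using \<open>Pos = {}\<close> \<open>Neg = {}\<close> \<open>v \<in> D\<close> unfolding Pos_def Neg_def by force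
qed

lemma reflect_self: "a \<noteq> 0 \<Longrightarrow> reflect a a = - a"
  by (simp add: reflect_def scaleR_2)

lemma reflect_reflect: "a \<noteq> 0 \<Longrightarrow> reflect a (reflect a x) = x"
  by (simp add: reflect_def inner_diff_left algebra_simps)

lemma weyl_group_closed:
  assumes "w \<in> weyl_group \<Gamma>" and "y \<in> X"
    and closed: "\<And>\<gamma> x. \<gamma> \<in> \<Gamma> \<Longrightarrow> x \<in> X \<Longrightarrow> reflect \<gamma> x \<in> X"
  shows "w y \<in> X"
  using assms(1) by induction (auto intro: assms(2) closed)

lemma gen_subsystem_subset:
  assumes "\<Gamma> \<subseteq> X" and "\<And>\<gamma> x. \<gamma> \<in> \<Gamma> \<Longrightarrow> x \<in> X \<Longrightarrow> reflect \<gamma> x \<in> X"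
  shows "gen_subsystem \<Gamma> \<subseteq> X"
  unfolding gen_subsystem_def using assms weyl_group_closed by blast

lemma subset_gen_subsystem: "\<Gamma> \<subseteq> gen_subsystem \<Gamma>"
proof
  fix x assume "x \<in> \<Gamma>"
  then show "x \<in> gen_subsystem \<Gamma>"
    unfolding gen_subsystem_def by (intro CollectI exI[of _ id] exI[of _ x]) (simp add: weyl_id)
qed

lemma reflect_in_gen_subsystem:
  assumes "\<gamma> \<in> \<Gamma>" and "x \<in> gen_subsystem \<Gamma>"
  shows "reflect \<gamma> x \<in> gen_subsystem \<Gamma>"
proof -
  obtain w v where "w \<in> weyl_group \<Gamma>" "v \<in> \<Gamma>" "x = w v"
    using assms(2) unfolding gen_subsystem_def by blast
  moreover have "reflect \<gamma> \<circ> w \<in> weyl_group \<Gamma>"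
    using calculation(1) assms(1) by (rule weyl_step)
  ultimately have "reflect \<gamma> x = (reflect \<gamma> \<circ> w) v \<and> reflect \<gamma> \<circ> w \<in> weyl_group \<Gamma> \<and> v \<in> \<Gamma>"
    by simp
  then show ?thesis unfolding gen_subsystem_def by blast
qed

lemma uminus_in_gen_subsystem:
  assumes "\<gamma> \<in> \<Gamma>" and "\<gamma> \<noteq> 0"
  shows "- \<gamma> \<in> gen_subsystem \<Gamma>"
proof -
  have "reflect \<gamma> \<gamma> \<in> gen_subsystem \<Gamma>"
    using assms(1) subset_gen_subsystem by (blast intro: reflect_in_gen_subsystem)
  then show ?thesis using reflect_self[OF assms(2)] by simp
qed

section \<open>Root systems with a basis of simple roots\<close>

locale based_root_system =
  fixes \<Phi> :: "'a::euclidean_space set" and \<alpha> :: "nat \<Rightarrow> 'a" and n :: nat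
  assumes crystallographic: "crystallographic_root_system \<Phi>"
    and simple: "simple_roots \<Phi> \<alpha> n"
begin

lemma finite_roots: "finite \<Phi>"
  and zero_notin_roots: "0 \<notin> \<Phi>"
  and span_roots: "span \<Phi> = UNIV"
  and reflect_in_roots: "a \<in> \<Phi> \<Longrightarrow> b \<in> \<Phi> \<Longrightarrow> reflect a b \<in> \<Phi>"
  and cartan_Ints: "a \<in> \<Phi> \<Longrightarrow> b \<in> \<Phi> \<Longrightarrow> 2 * (b \<bullet> a) / (a \<bullet> a) \<in> \<int>"
  and roots_reduced: "a \<in> \<Phi> \<Longrightarrow> c *\<^sub>R a \<in> \<Phi> \<Longrightarrow> c = 1 \<or> c = -1"
  using crystallographic unfolding crystallographic_root_system_def by auto

lemma n_eq_DIM: "n = DIM('a)"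
  and inj_on_simple: "inj_on \<alpha> {1..n}"
  and simple_root_basis: "is_root_basis \<Phi> (\<alpha> ` {1..n})"
  using simple unfolding simple_roots_def by auto

lemma simple_in_roots: "j \<in> {1..n} \<Longrightarrow> \<alpha> j \<in> \<Phi>"
  using simple_root_basis unfolding is_root_basis_def by auto

lemma independent_simple: "independent (\<alpha> ` {1..n})"
  using simple_root_basis unfolding is_root_basis_def by auto

lemma root_nonzero: "a \<in> \<Phi> \<Longrightarrow> a \<noteq> 0"
  using zero_notin_roots by auto

lemma uminus_in_roots: "a \<in> \<Phi> \<Longrightarrow> - a \<in> \<Phi>"
  by (metis reflect_self reflect_in_roots root_nonzero)

lemma span_simple: "span (\<alpha> ` {1..n}) = UNIV"
proof -
  have "\<Phi> \<subseteq> span (\<alpha> ` {1..n})"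
  proof
    fix \<beta> assume "\<beta> \<in> \<Phi>"
    then obtain c where "\<beta> = (\<Sum>b\<in>\<alpha> ` {1..n}. c b *\<^sub>R b)"
      using simple_root_basis unfolding is_root_basis_def by blast
    then show "\<beta> \<in> span (\<alpha> ` {1..n})"
      by (simp add: span_base span_scale span_sum)
  qed
  then show ?thesis using span_roots span_minimal[OF _ subspace_span] by blast
qed

lemma sum_simple_reindex: "(\<Sum>v\<in>\<alpha> ` {1..n}. f v) = (\<Sum>j=1..n. f (\<alpha> j))"
  using sum.reindex[OF inj_on_simple] by simp

lemma ex_simple_expansion: "\<exists>c. x = (\<Sum>j=1..n. c j *\<^sub>R \<alpha> j)"
proof -
  obtain u where "x = (\<Sum>v\<in>\<alpha> ` {1..n}. u v *\<^sub>R v)"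
    using span_simple span_finite[of "\<alpha> ` {1..n}"] by auto
  then show ?thesis unfolding sum_simple_reindex by (intro exI[of _ "\<lambda>j. u (\<alpha> j)"])
qed

lemma simple_expansion_unique:
  assumes "(\<Sum>j=1..n. c j *\<^sub>R \<alpha> j) = (\<Sum>j=1..n. e j *\<^sub>R \<alpha> j)" and "j \<in> {1..n}"
  shows "c j = e j"
proof -
  define u where "u v = c (inv_into {1..n} \<alpha> v) - e (inv_into {1..n} \<alpha> v)" for v
  have u: "u (\<alpha> k) = c k - e k" if "k \<in> {1..n}" for k
    using inv_into_f_f[OF inj_on_simple that] by (simp add: u_def)
  have "(\<Sum>v\<in>\<alpha> ` {1..n}. u v *\<^sub>R v) = (\<Sum>k=1..n. (c k - e k) *\<^sub>R \<alpha> k)"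
    unfolding sum_simple_reindex by (intro sum.cong) (auto simp: u)
  also have "\<dots> = 0"
    using assms(1) by (simp add: scaleR_diff_left sum_subtractf)
  finally have "u (\<alpha> j) = 0"
    using independent_simple assms(2) unfolding independent_explicit by blast
  then show ?thesis using u[OF assms(2)] by simp
qed

lemma coeff_eqI:
  assumes "x = (\<Sum>j=1..n. c j *\<^sub>R \<alpha> j)"
  shows "coeff \<alpha> n x = (\<lambda>j. if j \<in> {1..n} then c j else 0)"
  unfolding coeff_def
proof (rule the_equality)
  fix e assume e: "(\<forall>j. j \<notin> {1..n} \<longrightarrow> e j = 0) \<and> x = (\<Sum>j=1..n. e j *\<^sub>R \<alpha> j)"
  show "e = (\<lambda>j. if j \<in> {1..n} then c j else 0)"
  proof
    fix j show "e j = (if j \<in> {1..n} then c j else 0)"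
      using e simple_expansion_unique[of e c j] assms by auto
  qed
qed (use assms in auto)

lemma simple_expansion: "x = (\<Sum>j=1..n. coeff \<alpha> n x j *\<^sub>R \<alpha> j)"
proof -
  obtain c where "x = (\<Sum>j=1..n. c j *\<^sub>R \<alpha> j)"
    using ex_simple_expansion by blast
  with coeff_eqI[OF this] show ?thesis by simp
qed

lemma coeff_outside: "j \<notin> {1..n} \<Longrightarrow> coeff \<alpha> n x j = 0"
  using ex_simple_expansion[of x] coeff_eqI by auto

lemma linear_coeff: "linear (\<lambda>x. coeff \<alpha> n x i)"
proof (rule linearI)
  fix x y
  have "x + y = (\<Sum>j=1..n. (coeff \<alpha> n x j + coeff \<alpha> n y j) *\<^sub>R \<alpha> j)"
    by (subst simple_expansion[of x], subst simple_expansion[of y])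
      (simp add: scaleR_add_left sum.distrib)
  from coeff_eqI[OF this] show "coeff \<alpha> n (x + y) i = coeff \<alpha> n x i + coeff \<alpha> n y i"
    by (simp add: coeff_outside)
next
  fix r and x :: 'a
  have "r *\<^sub>R x = (\<Sum>j=1..n. (r * coeff \<alpha> n x j) *\<^sub>R \<alpha> j)"
    by (subst simple_expansion[of x]) (simp add: scaleR_sum_right)
  from coeff_eqI[OF this] show "coeff \<alpha> n (r *\<^sub>R x) i = r *\<^sub>R coeff \<alpha> n x i"
    by (simp add: coeff_outside)
qed

lemma coeff_linear_simps:
  "coeff \<alpha> n (x + y) i = coeff \<alpha> n x i + coeff \<alpha> n y i"
  "coeff \<alpha> n (x - y) i = coeff \<alpha> n x i - coeff \<alpha> n y i"
  "coeff \<alpha> n (r *\<^sub>R x) i = r * coeff \<alpha> n x i"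
  "coeff \<alpha> n (- x) i = - coeff \<alpha> n x i"
  "coeff \<alpha> n 0 i = 0"
  "coeff \<alpha> n (\<Sum>x\<in>A. f x) i = (\<Sum>x\<in>A. coeff \<alpha> n (f x) i)"
proof -
  note lin = linear_coeff[of i]
  show "coeff \<alpha> n (x + y) i = coeff \<alpha> n x i + coeff \<alpha> n y i"
    using linear_add[OF lin] by blast
  show "coeff \<alpha> n (x - y) i = coeff \<alpha> n x i - coeff \<alpha> n y i"
    using linear_diff[OF lin] by blast
  show "coeff \<alpha> n (r *\<^sub>R x) i = r * coeff \<alpha> n x i"
    using linear_scale[OF lin] by simp
  show "coeff \<alpha> n (- x) i = - coeff \<alpha> n x i"
    using linear_neg[OF lin] by blast
  show "coeff \<alpha> n 0 i = 0"
    using linear_0[OF lin] by blast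
  show "coeff \<alpha> n (\<Sum>x\<in>A. f x) i = (\<Sum>x\<in>A. coeff \<alpha> n (f x) i)"
    using linear_sum[OF lin] by blast
qed

lemma coeff_simple: "k \<in> {1..n} \<Longrightarrow> coeff \<alpha> n (\<alpha> k) i = (if i = k then 1 else 0)"
proof -
  assume k: "k \<in> {1..n}"
  have "(\<Sum>j=1..n. (if j = k then 1 else 0) *\<^sub>R \<alpha> j) = (\<Sum>j=1..n. if j = k then \<alpha> j else 0)"
    by (rule sum.cong) auto
  then have "\<alpha> k = (\<Sum>j=1..n. (if j = k then 1 else 0) *\<^sub>R \<alpha> j)"
    using k by simp
  from coeff_eqI[OF this] show ?thesis using k by auto
qed

lemma eq_if_coeff_eq: "(\<And>i. i \<in> {1..n} \<Longrightarrow> coeff \<alpha> n x i = coeff \<alpha> n y i) \<Longrightarrow> x = y"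
  by (subst simple_expansion[of x], subst simple_expansion[of y]) (rule sum.cong, auto)

lemma ex_coeff_nonzero:
  assumes "x \<noteq> 0" shows "\<exists>i\<in>{1..n}. coeff \<alpha> n x i \<noteq> 0"
proof (rule ccontr)
  assume "\<not> ?thesis"
  then have "x = 0" by (intro eq_if_coeff_eq) (simp add: coeff_linear_simps)
  then show False using assms by simp
qed

lemma inner_simple_expansion: "y \<bullet> v = (\<Sum>k=1..n. coeff \<alpha> n y k * (\<alpha> k \<bullet> v))"
  by (subst simple_expansion[of y]) (simp add: inner_sum_left)

lemma
  assumes "\<beta> \<in> \<Phi>"
  shows root_coeff_Ints: "coeff \<alpha> n \<beta> i \<in> \<int>"
    and root_coeff_sign: "(\<forall>i\<in>{1..n}. coeff \<alpha> n \<beta> i \<ge> 0) \<or> (\<forall>i\<in>{1..n}. coeff \<alpha> n \<beta> i \<le> 0)"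
proof -
  obtain c where c: "\<forall>b\<in>\<alpha> ` {1..n}. c b \<in> \<int>"
    "(\<forall>b\<in>\<alpha> ` {1..n}. c b \<ge> 0) \<or> (\<forall>b\<in>\<alpha> ` {1..n}. c b \<le> 0)"
    "\<beta> = (\<Sum>b\<in>\<alpha> ` {1..n}. c b *\<^sub>R b)"
    using simple_root_basis assms unfolding is_root_basis_def by blast
  have "coeff \<alpha> n \<beta> = (\<lambda>j. if j \<in> {1..n} then c (\<alpha> j) else 0)"
    using c(3) unfolding sum_simple_reindex by (rule coeff_eqI)
  then show "coeff \<alpha> n \<beta> i \<in> \<int>"
    and "(\<forall>i\<in>{1..n}. coeff \<alpha> n \<beta> i \<ge> 0) \<or> (\<forall>i\<in>{1..n}. coeff \<alpha> n \<beta> i \<le> 0)"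
    using c(1,2) by auto
qed

lemma inner_coweight: "i \<in> {1..n} \<Longrightarrow> x \<bullet> coweight \<alpha> n i = coeff \<alpha> n x i"
proof -
  assume i: "i \<in> {1..n}"
  define w where "w = (\<Sum>b\<in>Basis. coeff \<alpha> n b i *\<^sub>R b)"
  have w: "x \<bullet> w = coeff \<alpha> n x i" for x
  proof -
    have "x \<bullet> w = coeff \<alpha> n (\<Sum>b\<in>Basis. (x \<bullet> b) *\<^sub>R b) i"
      by (simp add: w_def inner_sum_right coeff_linear_simps mult.commute)
    then show ?thesis by (simp add: euclidean_representation)
  qed
  have "coweight \<alpha> n i = w"
    unfolding coweight_def
  proof (rule the_equality)
    fix w' assume w': "\<forall>j\<in>{1..n}. \<alpha> j \<bullet> w' = (if j = i then 1 else 0)"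
    have orth: "\<alpha> j \<bullet> (w' - w) = 0" if "j \<in> {1..n}" for j
      using w' that by (simp add: inner_diff_right w coeff_simple)
    have "orthogonal (w' - w) (w' - w)"
    proof (rule orthogonal_to_span[of "w' - w" "\<alpha> ` {1..n}"])
      show "w' - w \<in> span (\<alpha> ` {1..n})" using span_simple by simp
      fix y assume "y \<in> \<alpha> ` {1..n}"
      then show "orthogonal (w' - w) y"
        using orth by (auto simp: orthogonal_def inner_commute[of "w' - w"])
    qed
    then show "w' = w" by (simp add: orthogonal_def)
  qed (simp add: w coeff_simple)
  then show ?thesis by (simp add: w)
qed

lemma inner_square_less:
  assumes a: "a \<in> \<Phi>" and b: "b \<in> \<Phi>" and "b \<noteq> a" and "b \<noteq> - a"
  shows "(a \<bullet> b)\<^sup>2 < (a \<bullet> a) * (b \<bullet> b)"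
proof -
  have "\<bar>a \<bullet> b\<bar> \<noteq> norm a * norm b"
  proof
    assume "\<bar>a \<bullet> b\<bar> = norm a * norm b"
    then obtain s where s: "norm a *\<^sub>R b = s *\<^sub>R a"
      using norm_cauchy_schwarz_abs_eq by (metis scaleR_minus_left)
    have "b = (1 / norm a) *\<^sub>R (norm a *\<^sub>R b)"
      using root_nonzero[OF a] by simp
    also have "\<dots> = (s / norm a) *\<^sub>R a"
      using s by simp
    finally have "b = (s / norm a) *\<^sub>R a" .
    then show False using roots_reduced[OF a, of "s / norm a"] b assms(3,4) by auto
  qed
  then have "\<bar>a \<bullet> b\<bar> < norm a * norm b"
    using Cauchy_Schwarz_ineq2[of a b] by linarith
  then have "\<bar>a \<bullet> b\<bar>\<^sup>2 < (norm a * norm b)\<^sup>2"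
    by (intro power_strict_mono) auto
  then show ?thesis by (simp add: power_mult_distrib power2_norm_eq_inner)
qed

text \<open>The two Cartan integers of \<open>a\<close> and \<open>b\<close> are positive and, by the strict Cauchy-Schwarz
  inequality, have product less than \<open>4\<close>.\<close>
lemma cartan_integer_eq_1:
  assumes a: "a \<in> \<Phi>" and b: "b \<in> \<Phi>" and pos: "a \<bullet> b > 0" and "a \<noteq> b"
  shows "2 * (a \<bullet> b) / (b \<bullet> b) = 1 \<or> 2 * (b \<bullet> a) / (a \<bullet> a) = 1"
proof -
  have aa: "a \<bullet> a > 0" "b \<bullet> b > 0"
    using root_nonzero a b by auto
  have "b \<noteq> - a"
  proof
    assume "b = - a"
    then show False using pos aa(1) by simp
  qed
  define p where "p = 2 * (a \<bullet> b) / (b \<bullet> b)"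
  define q where "q = 2 * (b \<bullet> a) / (a \<bullet> a)"
  obtain P :: int where P: "p = of_int P"
    using cartan_Ints[OF b a] Ints_cases unfolding p_def by metis
  obtain Q :: int where Q: "q = of_int Q"
    using cartan_Ints[OF a b] Ints_cases unfolding q_def by metis
  have "0 < p" "0 < q"
    using pos aa by (simp_all add: p_def q_def inner_commute)
  then have "P \<ge> 1" "Q \<ge> 1"
    using P Q by simp_all
  have "of_int (P * Q) = p * q"
    by (simp add: P Q)
  also have "\<dots> = 4 * (a \<bullet> b)\<^sup>2 / ((a \<bullet> a) * (b \<bullet> b))"
    by (simp add: p_def q_def inner_commute power2_eq_square mult.commute mult.left_commute)
  also have "\<dots> < 4"
    using inner_square_less[OF a b] \<open>a \<noteq> b\<close> \<open>b \<noteq> - a\<close> aa by (simp add: divide_less_eq)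
  finally have "P * Q < 4" by linarith
  have "P = 1 \<or> Q = 1"
  proof (rule ccontr)
    assume "\<not> (P = 1 \<or> Q = 1)"
    then have "2 * 2 \<le> P * Q"
      using \<open>P \<ge> 1\<close> \<open>Q \<ge> 1\<close> by (intro mult_mono) auto
    then show False using \<open>P * Q < 4\<close> by simp
  qed
  then show ?thesis using P Q by (auto simp: p_def q_def)
qed

lemma diff_in_roots:
  assumes a: "a \<in> \<Phi>" and b: "b \<in> \<Phi>" and "a \<bullet> b > 0" and "a \<noteq> b"
  shows "a - b \<in> \<Phi>"
  using cartan_integer_eq_1[OF assms]
proof
  assume "2 * (a \<bullet> b) / (b \<bullet> b) = 1"
  then have "reflect b a = a - b" unfolding reflect_def by (metis scaleR_one)
  then show ?thesis using reflect_in_roots[OF b a] by simp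
next
  assume "2 * (b \<bullet> a) / (a \<bullet> a) = 1"
  then have "reflect a b = - (a - b)" unfolding reflect_def by (metis scaleR_one minus_diff_eq)
  then show ?thesis using uminus_in_roots[OF reflect_in_roots[OF a b]] by simp
qed

lemma add_in_roots:
  "a \<in> \<Phi> \<Longrightarrow> b \<in> \<Phi> \<Longrightarrow> a \<bullet> b < 0 \<Longrightarrow> a \<noteq> - b \<Longrightarrow> a + b \<in> \<Phi>"
  using diff_in_roots[of a "- b"] uminus_in_roots by simp

lemma pos_root_in_roots: "\<beta> \<in> pos_roots \<Phi> \<alpha> n \<Longrightarrow> \<beta> \<in> \<Phi>"
  by (simp add: pos_roots_def)

lemma pos_roots_or_uminus: "\<beta> \<in> \<Phi> \<Longrightarrow> \<beta> \<in> pos_roots \<Phi> \<alpha> n \<or> - \<beta> \<in> pos_roots \<Phi> \<alpha> n"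
  using root_coeff_sign[of \<beta>] uminus_in_roots[of \<beta>]
  by (auto simp: pos_roots_def coeff_linear_simps)

lemma pos_root_coeff_Nats: "\<beta> \<in> pos_roots \<Phi> \<alpha> n \<Longrightarrow> coeff \<alpha> n \<beta> i \<in> \<nat>"
  using root_coeff_Ints[of \<beta> i] coeff_outside[of i \<beta>]
  by (cases "i \<in> {1..n}") (auto simp: pos_roots_def Nats_altdef2)

lemma pos_root_coeff_nonneg: "\<beta> \<in> pos_roots \<Phi> \<alpha> n \<Longrightarrow> coeff \<alpha> n \<beta> i \<ge> 0"
  using pos_root_coeff_Nats[of \<beta> i] by (auto simp: Nats_altdef2)

lemma pos_rootsI: "x \<in> \<Phi> \<Longrightarrow> k \<in> {1..n} \<Longrightarrow> coeff \<alpha> n x k > 0 \<Longrightarrow> x \<in> pos_roots \<Phi> \<alpha> n"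
  using root_coeff_sign[of x] by (force simp: pos_roots_def)

lemma simple_in_pos_roots: "i \<in> {1..n} \<Longrightarrow> \<alpha> i \<in> pos_roots \<Phi> \<alpha> n"
  by (auto simp: pos_roots_def simple_in_roots coeff_simple)

lemma uminus_pos_root_notin_pos_roots:
  assumes "x \<in> pos_roots \<Phi> \<alpha> n" shows "- x \<notin> pos_roots \<Phi> \<alpha> n"
proof
  assume "- x \<in> pos_roots \<Phi> \<alpha> n"
  then have "x = 0"
    using assms by (intro eq_if_coeff_eq) (force simp: pos_roots_def coeff_linear_simps)
  then show False using assms zero_notin_roots by (simp add: pos_roots_def)
qed

lemma simple_inner_nonpos:
  assumes i: "i \<in> {1..n}" and j: "j \<in> {1..n}" and "i \<noteq> j"
  shows "\<alpha> i \<bullet> \<alpha> j \<le> 0"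
proof (rule ccontr)
  assume "\<not> ?thesis"
  moreover have "\<alpha> i \<noteq> \<alpha> j" using inj_on_simple i j \<open>i \<noteq> j\<close> by (meson inj_on_eq_iff)
  ultimately have r: "\<alpha> i - \<alpha> j \<in> \<Phi>" using diff_in_roots[OF simple_in_roots[OF i] simple_in_roots[OF j]] by simp
  have "coeff \<alpha> n (\<alpha> i - \<alpha> j) i = 1" "coeff \<alpha> n (\<alpha> i - \<alpha> j) j = -1"
    using i j \<open>i \<noteq> j\<close> by (auto simp: coeff_linear_simps coeff_simple)
  then show False using root_coeff_sign[OF r] i j by force
qed

definition height :: "'a \<Rightarrow> real" where
  "height x = (\<Sum>i=1..n. coeff \<alpha> n x i)"

lemma linear_height: "linear height"
  unfolding height_def by (intro linear_compose_sum ballI linear_coeff)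

lemma height_simps:
  "height (x + y) = height x + height y"
  "height (x - y) = height x - height y"
  "height (r *\<^sub>R x) = r * height x"
  "height (- x) = - height x"
  "height (\<Sum>x\<in>A. f x) = (\<Sum>x\<in>A. height (f x))"
  using linear_add[OF linear_height] linear_diff[OF linear_height]
    linear_scale[OF linear_height] linear_neg[OF linear_height] linear_sum[OF linear_height]
  by simp_all

lemma height_simple: "i \<in> {1..n} \<Longrightarrow> height (\<alpha> i) = 1"
  by (simp add: height_def coeff_simple)

lemma
  assumes "\<beta> \<in> pos_roots \<Phi> \<alpha> n"
  shows height_pos_root_Nats: "height \<beta> \<in> \<nat>"
    and height_pos_root_ge_1: "height \<beta> \<ge> 1"
proof -
  show "height \<beta> \<in> \<nat>"
    unfolding height_def using pos_root_coeff_Nats[OF assms] by (intro Nats_sum)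
  have "\<beta> \<noteq> 0" using assms zero_notin_roots by (auto simp: pos_roots_def)
  then obtain i where i: "i \<in> {1..n}" "coeff \<alpha> n \<beta> i \<noteq> 0"
    using ex_coeff_nonzero by blast
  then have "1 \<le> coeff \<alpha> n \<beta> i"
    using pos_root_coeff_Nats[OF assms, of i] by (auto elim!: Nats_cases)
  also have "\<dots> \<le> height \<beta>"
    unfolding height_def using pos_root_coeff_nonneg[OF assms] i by (intro member_le_sum) auto
  finally show "height \<beta> \<ge> 1" .
qed

lemma pos_root_height_induct [consumes 1, case_names less]:
  assumes "x \<in> pos_roots \<Phi> \<alpha> n"
    and "\<And>x. x \<in> pos_roots \<Phi> \<alpha> n \<Longrightarrow>
           (\<And>y. y \<in> pos_roots \<Phi> \<alpha> n \<Longrightarrow> height y < height x \<Longrightarrow> P y) \<Longrightarrow> P x"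
  shows "P x"
  using assms(1)
proof (induction "nat \<lfloor>height x\<rfloor>" arbitrary: x rule: less_induct)
  case less
  show ?case
  proof (rule assms(2)[OF less.prems])
    fix y assume y: "y \<in> pos_roots \<Phi> \<alpha> n" "height y < height x"
    moreover have "nat \<lfloor>height y\<rfloor> < nat \<lfloor>height x\<rfloor>"
      using height_pos_root_Nats[OF y(1)] height_pos_root_Nats[OF less.prems] y(2)
      by (auto elim!: Nats_cases)
    ultimately show "P y" using less.hyps by blast
  qed
qed

lemma ex_simple_inner_pos:
  assumes x: "x \<in> pos_roots \<Phi> \<alpha> n"
  shows "\<exists>i\<in>{1..n}. coeff \<alpha> n x i > 0 \<and> x \<bullet> \<alpha> i > 0"
proof -
  have "x \<bullet> x > 0"
    using root_nonzero[OF pos_root_in_roots[OF x]] by simp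
  then have "(\<Sum>k=1..n. coeff \<alpha> n x k * (\<alpha> k \<bullet> x)) > 0"
    using inner_simple_expansion[of x x] by simp
  then obtain i where i: "i \<in> {1..n}" "coeff \<alpha> n x i * (\<alpha> i \<bullet> x) > 0"
    by (meson not_le sum_nonpos)
  then show ?thesis
    using pos_root_coeff_nonneg[OF x, of i] by (auto simp: inner_commute zero_less_mult_iff)
qed

lemma pos_root_eq_simple:
  assumes x: "x \<in> pos_roots \<Phi> \<alpha> n" and i: "i \<in> {1..n}"
    and zero: "\<And>k. k \<in> {1..n} \<Longrightarrow> k \<noteq> i \<Longrightarrow> coeff \<alpha> n x k = 0"
  shows "x = \<alpha> i"
proof -
  define c where "c = coeff \<alpha> n x i"
  have x_eq: "x = c *\<^sub>R \<alpha> i"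
  proof (rule eq_if_coeff_eq)
    fix j assume "j \<in> {1..n}"
    then show "coeff \<alpha> n x j = coeff \<alpha> n (c *\<^sub>R \<alpha> i) j"
      using zero[of j] by (auto simp: c_def coeff_linear_simps coeff_simple[OF i])
  qed
  then have "c = 1 \<or> c = -1"
    using roots_reduced[OF simple_in_roots[OF i]] pos_root_in_roots[OF x] by blast
  moreover have "c \<ge> 0"
    using pos_root_coeff_nonneg[OF x] by (simp add: c_def)
  ultimately show ?thesis using x_eq by auto
qed

text \<open>Subtracting from \<open>x\<close> a simple root \<open>\<alpha> i\<close> with \<open>x \<bullet> \<alpha> i > 0\<close> gives a root, which is
  positive because \<open>x \<noteq> \<alpha> i\<close> has another positive coordinate.\<close>
lemma pos_root_minus_simple:
  assumes x: "x \<in> pos_roots \<Phi> \<alpha> n" and "height x \<ge> 2"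
  shows "\<exists>i\<in>{1..n}. x - \<alpha> i \<in> pos_roots \<Phi> \<alpha> n"
proof -
  obtain i where i: "i \<in> {1..n}" "x \<bullet> \<alpha> i > 0"
    using ex_simple_inner_pos[OF x] by blast
  have "x \<noteq> \<alpha> i" using \<open>height x \<ge> 2\<close> height_simple[OF i(1)] by auto
  then have r: "x - \<alpha> i \<in> \<Phi>"
    using diff_in_roots[OF pos_root_in_roots[OF x] simple_in_roots[OF i(1)] i(2)] by blast
  obtain k where k: "k \<in> {1..n}" "k \<noteq> i" "coeff \<alpha> n x k \<noteq> 0"
    using pos_root_eq_simple[OF x i(1)] \<open>x \<noteq> \<alpha> i\<close> by blast
  then have "coeff \<alpha> n (x - \<alpha> i) k > 0"
    using pos_root_coeff_nonneg[OF x, of k] by (simp add: coeff_linear_simps coeff_simple[OF i(1)])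
  then show ?thesis using pos_rootsI[OF r k(1)] i(1) by blast
qed

text \<open>Reflecting in \<open>\<alpha> i\<close> would turn \<open>y + \<alpha> i\<close> into \<open>y - \<alpha> i\<close>, a root with coefficients
  of both signs.\<close>
lemma add_simple_notin_roots:
  assumes y: "y \<in> pos_roots \<Phi> \<alpha> n" and i: "i \<in> {1..n}"
    and "coeff \<alpha> n y i = 0" and "y \<bullet> \<alpha> i = 0"
  shows "y + \<alpha> i \<notin> \<Phi>"
proof
  assume r: "y + \<alpha> i \<in> \<Phi>"
  have "\<alpha> i \<noteq> 0" using root_nonzero simple_in_roots i by blast
  then have "reflect (\<alpha> i) (y + \<alpha> i) = y - \<alpha> i"
    using \<open>y \<bullet> \<alpha> i = 0\<close> by (simp add: reflect_def inner_add_left scaleR_2 algebra_simps)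
  then have r': "y - \<alpha> i \<in> \<Phi>" using reflect_in_roots[OF simple_in_roots[OF i] r] by simp
  have "y \<noteq> 0" using y zero_notin_roots by (auto simp: pos_roots_def)
  then obtain l where l: "l \<in> {1..n}" "coeff \<alpha> n y l \<noteq> 0"
    using ex_coeff_nonzero by blast
  then have "coeff \<alpha> n (y - \<alpha> i) l > 0" "coeff \<alpha> n (y - \<alpha> i) i = -1"
    using pos_root_coeff_nonneg[OF y, of l] \<open>coeff \<alpha> n y i = 0\<close>
    by (auto simp: coeff_linear_simps coeff_simple[OF i] less_le)
  then show False using root_coeff_sign[OF r'] l(1) i by force
qed

lemma inner_eq_0_if_orthogonal_support:
  assumes "\<And>k l. k \<in> {1..n} \<Longrightarrow> l \<in> {1..n} \<Longrightarrow> coeff \<alpha> n x k \<noteq> 0 \<Longrightarrow> coeff \<alpha> n y l \<noteq> 0 \<Longrightarrow>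
      \<alpha> k \<bullet> \<alpha> l = 0"
  shows "x \<bullet> y = 0"
proof -
  have "x \<bullet> y = (\<Sum>k=1..n. coeff \<alpha> n x k * (\<Sum>l=1..n. coeff \<alpha> n y l * (\<alpha> l \<bullet> \<alpha> k)))"
    by (subst inner_simple_expansion, subst inner_commute, subst inner_simple_expansion) simp
  also have "\<dots> = 0"
  proof (intro sum.neutral ballI)
    fix k assume k: "k \<in> {1..n}"
    show "coeff \<alpha> n x k * (\<Sum>l=1..n. coeff \<alpha> n y l * (\<alpha> l \<bullet> \<alpha> k)) = 0"
    proof (cases "coeff \<alpha> n x k = 0")
      case False
      have "coeff \<alpha> n y l * (\<alpha> l \<bullet> \<alpha> k) = 0" if "l \<in> {1..n}" for l
        using assms[OF k that False] by (cases "coeff \<alpha> n y l = 0") (simp_all add: inner_commute)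
      then have "(\<Sum>l=1..n. coeff \<alpha> n y l * (\<alpha> l \<bullet> \<alpha> k)) = 0"
        by (intro sum.neutral) auto
      then show ?thesis by simp
    qed simp
  qed
  finally show ?thesis .
qed

lemma inner_simple_eq_0_if_orthogonal_block:
  assumes "i \<in> B" and B: "B \<subseteq> {1..n}" and zero: "\<forall>k\<in>B. coeff \<alpha> n y k = 0"
    and orth: "\<And>k l. k \<in> {1..n} - B \<Longrightarrow> l \<in> B \<Longrightarrow> \<alpha> k \<bullet> \<alpha> l = 0"
  shows "y \<bullet> \<alpha> i = 0"
proof (rule inner_eq_0_if_orthogonal_support)
  have i: "i \<in> {1..n}" using \<open>i \<in> B\<close> B by blast
  fix k l assume "k \<in> {1..n}" "l \<in> {1..n}" "coeff \<alpha> n y k \<noteq> 0" "coeff \<alpha> n (\<alpha> i) l \<noteq> 0"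
  then have "k \<in> {1..n} - B" "l = i"
    using zero by (auto simp: coeff_simple[OF i] split: if_splits)
  then show "\<alpha> k \<bullet> \<alpha> l = 0" using orth \<open>i \<in> B\<close> by blast
qed

lemma coeff_add_simple_eq_0_on_block:
  assumes y: "y \<in> pos_roots \<Phi> \<alpha> n" and i: "i \<in> {1..n}" and "y + \<alpha> i \<in> \<Phi>"
    and C: "C \<subseteq> {1..n}" and zero: "\<forall>k\<in>C. coeff \<alpha> n y k = 0"
    and orth: "\<And>k l. k \<in> {1..n} - C \<Longrightarrow> l \<in> C \<Longrightarrow> \<alpha> k \<bullet> \<alpha> l = 0"
  shows "\<forall>k\<in>C. coeff \<alpha> n (y + \<alpha> i) k = 0"
proof -
  have "i \<notin> C"
  proof
    assume "i \<in> C"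
    then have "y \<bullet> \<alpha> i = 0"
      by (rule inner_simple_eq_0_if_orthogonal_block[OF _ C zero orth])
    then show False
      using add_simple_notin_roots[OF y i] zero \<open>i \<in> C\<close> \<open>y + \<alpha> i \<in> \<Phi>\<close> by blast
  qed
  then show ?thesis using zero by (auto simp: coeff_linear_simps coeff_simple[OF i])
qed

lemma pos_root_support_in_block:
  assumes B: "B \<subseteq> {1..n}"
    and orth: "\<And>k l. k \<in> {1..n} - B \<Longrightarrow> l \<in> B \<Longrightarrow> \<alpha> k \<bullet> \<alpha> l = 0"
    and x: "x \<in> pos_roots \<Phi> \<alpha> n"
  shows "(\<forall>k\<in>B. coeff \<alpha> n x k = 0) \<or> (\<forall>k\<in>{1..n} - B. coeff \<alpha> n x k = 0)"
  using x
proof (induction rule: pos_root_height_induct)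
  case (less x)
  show ?case
  proof (cases "height x \<ge> 2")
    case False
    show ?thesis
    proof (rule ccontr)
      assume "\<not> ?thesis"
      then obtain k l where kl: "k \<in> B" "coeff \<alpha> n x k \<noteq> 0" "l \<in> {1..n} - B" "coeff \<alpha> n x l \<noteq> 0"
        by auto
      then have "coeff \<alpha> n x k \<ge> 1" "coeff \<alpha> n x l \<ge> 1"
        using pos_root_coeff_Nats[OF less.hyps, of k] pos_root_coeff_Nats[OF less.hyps, of l]
        by (auto elim!: Nats_cases)
      moreover have "(\<Sum>j\<in>{k,l}. coeff \<alpha> n x j) \<le> height x"
        unfolding height_def using kl(1,3) B pos_root_coeff_nonneg[OF less.hyps]
        by (intro sum_mono2) auto
      moreover have "k \<noteq> l" using kl(1,3) by blast
      ultimately show False using False by simp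
    qed
  next
    case True
    then obtain i where i: "i \<in> {1..n}" and y: "x - \<alpha> i \<in> pos_roots \<Phi> \<alpha> n"
      using pos_root_minus_simple[OF less.hyps] by blast
    have "height (x - \<alpha> i) < height x"
      using height_simple[OF i] by (simp add: height_simps)
    then have IH: "(\<forall>k\<in>B. coeff \<alpha> n (x - \<alpha> i) k = 0) \<or> (\<forall>k\<in>{1..n} - B. coeff \<alpha> n (x - \<alpha> i) k = 0)"
      using less.IH y by blast
    have xR: "x - \<alpha> i + \<alpha> i \<in> \<Phi>"
      using less.hyps by (simp add: pos_roots_def)
    have orth': "\<alpha> k \<bullet> \<alpha> l = 0" if "k \<in> {1..n} - ({1..n} - B)" "l \<in> {1..n} - B" for k l
      using that B orth[of l k] by (auto simp: inner_commute)
    from IH show ?thesis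
    proof
      assume "\<forall>k\<in>B. coeff \<alpha> n (x - \<alpha> i) k = 0"
      from coeff_add_simple_eq_0_on_block[OF y i xR B this orth] show ?thesis by simp
    next
      assume "\<forall>k\<in>{1..n} - B. coeff \<alpha> n (x - \<alpha> i) k = 0"
      from coeff_add_simple_eq_0_on_block[OF y i xR Diff_subset this orth'] show ?thesis by simp
    qed
  qed
qed

end

locale irreducible_based_root_system = based_root_system +
  assumes irreducible: "irreducible_root_system \<Phi>"
begin

text \<open>Otherwise the roots supported on \<open>B\<close> and those supported on its complement would split
  \<open>\<Phi>\<close> into two orthogonal parts.\<close>
lemma orthogonal_block_trivial:
  assumes B: "B \<subseteq> {1..n}"
    and orth: "\<And>k l. k \<in> {1..n} - B \<Longrightarrow> l \<in> B \<Longrightarrow> \<alpha> k \<bullet> \<alpha> l = 0"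
  shows "B = {} \<or> B = {1..n}"
proof (rule ccontr)
  assume "\<not> (B = {} \<or> B = {1..n})"
  then obtain i j where i: "i \<in> {1..n} - B" and j: "j \<in> B" using B by blast
  define X where "X = {x\<in>\<Phi>. \<forall>k\<in>B. coeff \<alpha> n x k = 0}"
  define Y where "Y = {x\<in>\<Phi>. \<forall>k\<in>{1..n} - B. coeff \<alpha> n x k = 0}"
  have "\<alpha> i \<in> X" "\<alpha> j \<in> Y"
    using i j B simple_in_roots by (auto simp: X_def Y_def coeff_simple)
  moreover have "X \<union> Y = \<Phi>"
  proof -
    have "x \<in> X \<union> Y" if x: "x \<in> \<Phi>" for x
    proof -
      obtain y where y: "y \<in> pos_roots \<Phi> \<alpha> n" "y = x \<or> y = - x"
        using pos_roots_or_uminus[OF x] by blast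
      then have "(\<forall>k\<in>B. coeff \<alpha> n y k = 0) \<or> (\<forall>k\<in>{1..n} - B. coeff \<alpha> n y k = 0)"
        using pos_root_support_in_block[OF B orth] by blast
      then show ?thesis using x y(2) by (auto simp: X_def Y_def coeff_linear_simps)
    qed
    then show ?thesis by (auto simp: X_def Y_def)
  qed
  moreover have "X \<inter> Y = {}"
  proof -
    have "x = 0" if "x \<in> X" "x \<in> Y" for x
      using that by (intro eq_if_coeff_eq) (auto simp: X_def Y_def coeff_linear_simps)
    then show ?thesis using zero_notin_roots by (auto simp: X_def)
  qed
  moreover have "x \<bullet> y = 0" if "x \<in> X" "y \<in> Y" for x y
  proof (rule inner_eq_0_if_orthogonal_support)
    fix k l assume "k \<in> {1..n}" "l \<in> {1..n}" "coeff \<alpha> n x k \<noteq> 0" "coeff \<alpha> n y l \<noteq> 0"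
    then have "k \<in> {1..n} - B" "l \<in> B" using that by (auto simp: X_def Y_def)
    then show "\<alpha> k \<bullet> \<alpha> l = 0" by (rule orth)
  qed
  ultimately have "X \<noteq> {}" "Y \<noteq> {}" "X \<union> Y = \<Phi>" "X \<inter> Y = {}" "\<forall>x\<in>X. \<forall>y\<in>Y. x \<bullet> y = 0"
    by auto
  with irreducible show False
    unfolding irreducible_root_system_def by blast
qed

lemma root_le_refl: "root_le \<alpha> n x x"
  by (simp add: root_le_def)

lemma root_le_trans: "root_le \<alpha> n x y \<Longrightarrow> root_le \<alpha> n y z \<Longrightarrow> root_le \<alpha> n x z"
  unfolding root_le_def
proof (intro ballI)
  fix i assume "\<forall>i\<in>{1..n}. coeff \<alpha> n y i - coeff \<alpha> n x i \<in> \<nat>"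
    "\<forall>i\<in>{1..n}. coeff \<alpha> n z i - coeff \<alpha> n y i \<in> \<nat>" and "i \<in> {1..n}"
  then have "(coeff \<alpha> n z i - coeff \<alpha> n y i) + (coeff \<alpha> n y i - coeff \<alpha> n x i) \<in> \<nat>"
    by (intro Nats_add) auto
  then show "coeff \<alpha> n z i - coeff \<alpha> n x i \<in> \<nat>" by simp
qed

lemma root_le_height: "root_le \<alpha> n x y \<Longrightarrow> height x \<le> height y"
  unfolding root_le_def height_def by (intro sum_mono) (auto simp: Nats_altdef2)

lemma root_le_height_eq:
  assumes "root_le \<alpha> n x y" and "height y \<le> height x"
  shows "y = x"
proof -
  have nonneg: "\<forall>i\<in>{1..n}. coeff \<alpha> n y i - coeff \<alpha> n x i \<ge> 0"
    using assms(1) unfolding root_le_def by (auto simp: Nats_altdef2)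
  have "(\<Sum>i=1..n. coeff \<alpha> n y i - coeff \<alpha> n x i) = 0"
    using assms root_le_height[OF assms(1)] by (simp add: height_def sum_subtractf)
  then have "\<forall>i\<in>{1..n}. coeff \<alpha> n y i - coeff \<alpha> n x i = 0"
    using nonneg by (subst (asm) sum_nonneg_eq_0_iff) auto
  then show "y = x" by (intro eq_if_coeff_eq) auto
qed

lemma root_le_if_diff_pos_root: "y - x \<in> pos_roots \<Phi> \<alpha> n \<Longrightarrow> root_le \<alpha> n x y"
  unfolding root_le_def using pos_root_coeff_Nats by (metis coeff_linear_simps(2))

definition maximal_pos_root :: "'a \<Rightarrow> bool" where
  "maximal_pos_root \<theta> \<longleftrightarrow>
     \<theta> \<in> pos_roots \<Phi> \<alpha> n \<and> (\<forall>y\<in>pos_roots \<Phi> \<alpha> n. root_le \<alpha> n \<theta> y \<longrightarrow> y = \<theta>)"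

lemma ex_maximal_pos_root_above:
  assumes x: "x \<in> pos_roots \<Phi> \<alpha> n"
  shows "\<exists>\<theta>. maximal_pos_root \<theta> \<and> root_le \<alpha> n x \<theta>"
proof -
  define S where "S = {y\<in>pos_roots \<Phi> \<alpha> n. root_le \<alpha> n x y}"
  have "finite S"
    using finite_roots by (rule finite_subset[rotated]) (auto simp: S_def pos_roots_def)
  moreover have "x \<in> S" using x root_le_refl by (simp add: S_def)
  ultimately have "Max (height ` S) \<in> height ` S"
    by (intro Max_in) auto
  then obtain y where "y \<in> S" "height y = Max (height ` S)"
    by auto
  then have y: "y \<in> S" "\<forall>z\<in>S. height z \<le> height y"
    using \<open>finite S\<close> by auto
  have "maximal_pos_root y"
    unfolding maximal_pos_root_def
  proof (intro conjI ballI impI)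
    show "y \<in> pos_roots \<Phi> \<alpha> n" using y by (simp add: S_def)
    fix z assume "z \<in> pos_roots \<Phi> \<alpha> n" "root_le \<alpha> n y z"
    moreover from this have "z \<in> S" using y(1) root_le_trans by (auto simp: S_def)
    ultimately show "z = y" using y(2) root_le_height_eq by blast
  qed
  then show ?thesis using y(1) by (auto simp: S_def)
qed

definition dominant :: "'a \<Rightarrow> bool" where
  "dominant x \<longleftrightarrow> (\<forall>i\<in>{1..n}. x \<bullet> \<alpha> i \<ge> 0)"

lemma maximal_pos_root_dominant:
  assumes \<theta>: "maximal_pos_root \<theta>"
  shows "dominant \<theta>"
  unfolding dominant_def
proof (intro ballI, rule ccontr)
  fix i assume i: "i \<in> {1..n}" and neg: "\<not> \<theta> \<bullet> \<alpha> i \<ge> 0"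
  have \<theta>pos: "\<theta> \<in> pos_roots \<Phi> \<alpha> n" using \<theta> by (simp add: maximal_pos_root_def)
  have "\<theta> \<noteq> - \<alpha> i"
    using uminus_pos_root_notin_pos_roots[OF simple_in_pos_roots[OF i]] \<theta>pos by auto
  then have "\<theta> + \<alpha> i \<in> \<Phi>"
    using add_in_roots[OF pos_root_in_roots[OF \<theta>pos] simple_in_roots[OF i]] neg by simp
  moreover have "coeff \<alpha> n (\<theta> + \<alpha> i) i > 0"
    using pos_root_coeff_nonneg[OF \<theta>pos, of i] by (simp add: coeff_linear_simps coeff_simple[OF i])
  moreover have "root_le \<alpha> n \<theta> (\<theta> + \<alpha> i)"
    using simple_in_pos_roots[OF i] by (intro root_le_if_diff_pos_root) simp
  ultimately have "\<theta> + \<alpha> i = \<theta>"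
    using \<theta> pos_rootsI[OF _ i] by (auto simp: maximal_pos_root_def)
  then show False using root_nonzero[OF simple_in_roots[OF i]] by simp
qed

text \<open>In \<open>\<theta> \<bullet> \<alpha> j = (\<Sum>l. c\<^sub>l(\<theta>) (\<alpha> l \<bullet> \<alpha> j))\<close> all terms are non-positive, but the sum is not.\<close>
lemma dominant_support_orthogonal:
  assumes \<theta>: "\<theta> \<in> pos_roots \<Phi> \<alpha> n" and "dominant \<theta>"
    and k: "k \<in> {1..n}" "coeff \<alpha> n \<theta> k > 0" and j: "j \<in> {1..n}" "coeff \<alpha> n \<theta> j = 0"
  shows "\<alpha> k \<bullet> \<alpha> j = 0"
proof -
  have terms: "coeff \<alpha> n \<theta> l * (\<alpha> l \<bullet> \<alpha> j) \<le> 0" if "l \<in> {1..n}" for l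
    using simple_inner_nonpos[OF that j(1)] pos_root_coeff_nonneg[OF \<theta>, of l] j(2)
    by (cases "l = j") (auto simp: mult_nonneg_nonpos)
  have "0 \<le> (\<Sum>l=1..n. coeff \<alpha> n \<theta> l * (\<alpha> l \<bullet> \<alpha> j))"
    using \<open>dominant \<theta>\<close> j(1) inner_simple_expansion unfolding dominant_def by metis
  then have "(\<Sum>l=1..n. coeff \<alpha> n \<theta> l * (\<alpha> l \<bullet> \<alpha> j)) = 0"
    using terms by (meson antisym sum_nonpos)
  then have "(\<Sum>l=1..n. - (coeff \<alpha> n \<theta> l * (\<alpha> l \<bullet> \<alpha> j))) = 0"
    by (simp add: sum_negf)
  then have "\<forall>l\<in>{1..n}. - (coeff \<alpha> n \<theta> l * (\<alpha> l \<bullet> \<alpha> j)) = 0"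
    using terms by (subst (asm) sum_nonneg_eq_0_iff) auto
  then have "coeff \<alpha> n \<theta> k * (\<alpha> k \<bullet> \<alpha> j) = 0"
    using k(1) by auto
  then show ?thesis using k(2) by simp
qed

lemma maximal_pos_root_coeff_pos:
  assumes \<theta>: "maximal_pos_root \<theta>" and i: "i \<in> {1..n}"
  shows "coeff \<alpha> n \<theta> i > 0"
proof -
  have \<theta>pos: "\<theta> \<in> pos_roots \<Phi> \<alpha> n" using \<theta> by (simp add: maximal_pos_root_def)
  define B where "B = {k\<in>{1..n}. coeff \<alpha> n \<theta> k = 0}"
  have "\<alpha> k \<bullet> \<alpha> l = 0" if "k \<in> {1..n} - B" "l \<in> B" for k l
    using that pos_root_coeff_nonneg[OF \<theta>pos, of k]
    by (intro dominant_support_orthogonal[OF \<theta>pos maximal_pos_root_dominant[OF \<theta>]])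
      (auto simp: B_def less_le)
  then have "B = {} \<or> B = {1..n}"
    by (intro orthogonal_block_trivial) (auto simp: B_def)
  moreover obtain l where l: "l \<in> {1..n}" "coeff \<alpha> n \<theta> l \<noteq> 0"
    using ex_coeff_nonzero root_nonzero[OF pos_root_in_roots[OF \<theta>pos]] by blast
  then have "l \<notin> B" by (simp add: B_def)
  then have "B \<noteq> {1..n}" using l(1) by blast
  ultimately have "i \<notin> B" by blast
  then show ?thesis using i pos_root_coeff_nonneg[OF \<theta>pos, of i] by (auto simp: B_def less_le)
qed

lemma ex_simple_inner_nonzero:
  assumes "x \<noteq> 0" shows "\<exists>k\<in>{1..n}. x \<bullet> \<alpha> k \<noteq> 0"
proof (rule ccontr)
  assume "\<not> (\<exists>k\<in>{1..n}. x \<bullet> \<alpha> k \<noteq> 0)"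
  then have "\<forall>k\<in>{1..n}. coeff \<alpha> n x k * (\<alpha> k \<bullet> x) = 0"
    by (simp add: inner_commute)
  then have "(\<Sum>k=1..n. coeff \<alpha> n x k * (\<alpha> k \<bullet> x)) = 0"
    by (rule sum.neutral)
  then have "x = 0"
    using inner_simple_expansion[of x x] by simp
  then show False using assms by simp
qed

lemma dominant_inner_pos:
  assumes "dominant \<theta>" and "\<theta> \<noteq> 0" and full: "\<And>i. i \<in> {1..n} \<Longrightarrow> coeff \<alpha> n \<theta>' i > 0"
  shows "\<theta> \<bullet> \<theta>' > 0"
proof -
  obtain k where k: "k \<in> {1..n}" "\<theta> \<bullet> \<alpha> k \<noteq> 0"
    using ex_simple_inner_nonzero[OF \<open>\<theta> \<noteq> 0\<close>] by blast
  have dom: "\<alpha> l \<bullet> \<theta> \<ge> 0" if "l \<in> {1..n}" for l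
    using \<open>dominant \<theta>\<close> that by (simp add: dominant_def inner_commute)
  have "0 < (\<Sum>l=1..n. coeff \<alpha> n \<theta>' l * (\<alpha> l \<bullet> \<theta>))"
  proof (rule sum_pos2[OF _ k(1)])
    show "0 < coeff \<alpha> n \<theta>' k * (\<alpha> k \<bullet> \<theta>)"
      using full[OF k(1)] dom[OF k(1)] k(2) by (simp add: inner_commute)
    show "0 \<le> coeff \<alpha> n \<theta>' l * (\<alpha> l \<bullet> \<theta>)" if "l \<in> {1..n}" for l
      using full[OF that] dom[OF that] by simp
  qed simp
  also have "\<dots> = \<theta>' \<bullet> \<theta>"
    by (rule inner_simple_expansion[symmetric])
  finally show ?thesis by (simp add: inner_commute)
qed

text \<open>Two distinct maximal roots would have positive inner product, so their difference would be a
  root comparable to both.\<close>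
lemma maximal_pos_root_unique:
  assumes \<theta>: "maximal_pos_root \<theta>" and \<theta>': "maximal_pos_root \<theta>'"
  shows "\<theta> = \<theta>'"
proof (rule ccontr)
  assume "\<theta> \<noteq> \<theta>'"
  have pos: "\<theta> \<in> pos_roots \<Phi> \<alpha> n" "\<theta>' \<in> pos_roots \<Phi> \<alpha> n"
    using \<theta> \<theta>' by (auto simp: maximal_pos_root_def)
  have "\<theta> \<bullet> \<theta>' > 0"
    using maximal_pos_root_dominant[OF \<theta>] root_nonzero[OF pos_root_in_roots[OF pos(1)]]
      maximal_pos_root_coeff_pos[OF \<theta>'] by (rule dominant_inner_pos)
  then have "\<theta> - \<theta>' \<in> \<Phi>"
    using diff_in_roots[OF pos_root_in_roots[OF pos(1)] pos_root_in_roots[OF pos(2)]] \<open>\<theta> \<noteq> \<theta>'\<close> by blast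
  then have "root_le \<alpha> n \<theta>' \<theta> \<or> root_le \<alpha> n \<theta> \<theta>'"
    using pos_roots_or_uminus root_le_if_diff_pos_root by fastforce
  then show False
    using \<theta> \<theta>' pos \<open>\<theta> \<noteq> \<theta>'\<close> by (auto simp: maximal_pos_root_def)
qed

lemma highest_root_maximal: "maximal_pos_root (highest_root \<Phi> \<alpha> n)"
  and root_le_highest_root: "\<beta> \<in> pos_roots \<Phi> \<alpha> n \<Longrightarrow> root_le \<alpha> n \<beta> (highest_root \<Phi> \<alpha> n)"
proof -
  have "n \<ge> 1" using n_eq_DIM DIM_positive[where 'a='a] by linarith
  then have "1 \<in> {1..n}" by simp
  then obtain \<theta> where \<theta>: "maximal_pos_root \<theta>"
    using ex_maximal_pos_root_above simple_in_pos_roots by blast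
  have above: "root_le \<alpha> n \<beta> \<theta>" if "\<beta> \<in> pos_roots \<Phi> \<alpha> n" for \<beta>
    using ex_maximal_pos_root_above[OF that] maximal_pos_root_unique[OF \<theta>] by blast
  have "highest_root \<Phi> \<alpha> n = \<theta>"
    unfolding highest_root_def
  proof (rule the_equality)
    fix \<theta>' assume "\<theta>' \<in> pos_roots \<Phi> \<alpha> n \<and> (\<forall>\<beta>\<in>pos_roots \<Phi> \<alpha> n. root_le \<alpha> n \<beta> \<theta>')"
    then show "\<theta>' = \<theta>"
      using \<theta> above by (auto simp: maximal_pos_root_def)
  qed (use \<theta> above in \<open>auto simp: maximal_pos_root_def\<close>)
  then show "maximal_pos_root (highest_root \<Phi> \<alpha> n)"
    and "\<beta> \<in> pos_roots \<Phi> \<alpha> n \<Longrightarrow> root_le \<alpha> n \<beta> (highest_root \<Phi> \<alpha> n)"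
    using \<theta> above by auto
qed

lemma coeff_le_hmult:
  assumes "\<beta> \<in> pos_roots \<Phi> \<alpha> n" and "i \<in> {1..n}"
  shows "coeff \<alpha> n \<beta> i \<le> hmult \<Phi> \<alpha> n i"
proof -
  have "hmult \<Phi> \<alpha> n i - coeff \<alpha> n \<beta> i \<in> \<nat>"
    using root_le_highest_root[OF assms(1)] assms(2) unfolding root_le_def hmult_def by blast
  then show ?thesis by (simp add: Nats_altdef2)
qed

lemma hmult_pos: "i \<in> {1..n} \<Longrightarrow> hmult \<Phi> \<alpha> n i > 0"
  using maximal_pos_root_coeff_pos[OF highest_root_maximal] by (simp add: hmult_def)

lemma hmult_Nats: "hmult \<Phi> \<alpha> n i \<in> \<nat>"
  using highest_root_maximal pos_root_coeff_Nats by (simp add: hmult_def maximal_pos_root_def)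

end

section \<open>Faces of the root polytope\<close>

locale root_system_face = irreducible_based_root_system +
  fixes I :: "nat set" and d :: real
  assumes I_subset: "I \<subseteq> {1..n}"
    and face_dim: "aff_dim (convex hull (face_vertices \<Phi> \<alpha> n I)) = int n - int (card I)"
    and d_pos: "d > 0"
    and S_d_nonempty: "S_set \<Phi> \<alpha> n I d \<noteq> {}"
    and d_max: "\<And>b. b > 0 \<Longrightarrow> S_set \<Phi> \<alpha> n I b \<noteq> {} \<Longrightarrow> b \<le> d"
begin

abbreviation "V \<equiv> face_vertices \<Phi> \<alpha> n I"
abbreviation "m \<equiv> hmult \<Phi> \<alpha> n"
abbreviation "J \<equiv> {1..n} - I"
abbreviation "Pi_J \<equiv> \<alpha> ` J"

lemma face_vertices_iff: "x \<in> V \<longleftrightarrow> x \<in> pos_roots \<Phi> \<alpha> n \<and> (\<forall>i\<in>I. coeff \<alpha> n x i = m i)"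
proof -
  have "x \<bullet> coweight \<alpha> n i = coeff \<alpha> n x i" if "i \<in> I" for i
    using that I_subset inner_coweight by blast
  then show ?thesis by (auto simp: face_vertices_def)
qed

lemma face_vertices_subset: "V \<subseteq> \<Phi>"
  using face_vertices_iff pos_root_in_roots by blast

lemma card_I: "card I \<le> n"
  using card_mono[OF _ I_subset] by simp

lemma face_vertices_nonempty: "V \<noteq> {}"
proof
  assume "V = {}"
  then show False using face_dim card_I by simp
qed

lemma S_set_iff: "x \<in> S_set \<Phi> \<alpha> n I b \<longleftrightarrow> x \<in> \<Phi> \<and> (\<forall>i\<in>I. coeff \<alpha> n x i = m i / b)"
  by (simp add: S_set_def)

lemma I_nonempty: "I \<noteq> {}"
proof
  assume "I = {}"
  then have "S_set \<Phi> \<alpha> n I (d + 1) \<noteq> {}" using S_d_nonempty by (simp add: S_set_def)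
  then show False using d_max[of "d + 1"] d_pos by simp
qed

definition i0 :: nat where "i0 = (SOME i. i \<in> I)"

lemma i0_in_I: "i0 \<in> I"
  using I_nonempty unfolding i0_def by (simp add: some_in_eq)

lemma i0_range: "i0 \<in> {1..n}"
  using i0_in_I I_subset by blast

lemma hmult_i0_pos: "m i0 > 0"
  using hmult_pos[OF i0_range] .

text \<open>On \<open>span V\<close> the coordinates indexed by \<open>I\<close> are proportional to those of the highest
  root (lemma \<open>span_face_iff\<close>); the level is the factor of proportionality, so \<open>S_b\<close> consists
  of the roots of level \<open>1 / b\<close> in \<open>span V\<close>.\<close>
definition level :: "'a \<Rightarrow> real" where
  "level x = coeff \<alpha> n x i0 / m i0"

lemma level_simps:
  "level (x + y) = level x + level y"
  "level (x - y) = level x - level y"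
  "level (r *\<^sub>R x) = r * level x"
  "level (- x) = - level x"
  "level (\<Sum>x\<in>A. f x) = (\<Sum>x\<in>A. level (f x))"
  by (simp_all add: level_def coeff_linear_simps add_divide_distrib diff_divide_distrib
      sum_divide_distrib)

lemma level_face_vertex: "v \<in> V \<Longrightarrow> level v = 1"
  using face_vertices_iff i0_in_I hmult_i0_pos by (simp add: level_def)

lemma level_simple_J: "j \<in> J \<Longrightarrow> level (\<alpha> j) = 0"
  using i0_in_I by (auto simp: level_def coeff_simple)

lemma level_nonneg: "x \<in> pos_roots \<Phi> \<alpha> n \<Longrightarrow> level x \<ge> 0"
  using pos_root_coeff_nonneg hmult_i0_pos by (simp add: level_def)

lemma level_le_1: "x \<in> pos_roots \<Phi> \<alpha> n \<Longrightarrow> level x \<le> 1"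
  using coeff_le_hmult[OF _ i0_range] hmult_i0_pos by (simp add: level_def)

lemma span_simple_J_iff: "x \<in> span Pi_J \<longleftrightarrow> (\<forall>i\<in>I. coeff \<alpha> n x i = 0)"
proof
  show "\<forall>i\<in>I. coeff \<alpha> n x i = 0" if "x \<in> span Pi_J"
    using that
  proof (induction rule: span_induct_alt)
    case (step c x y)
    then show ?case by (auto simp: coeff_linear_simps coeff_simple)
  qed (simp add: coeff_linear_simps)
next
  assume zero: "\<forall>i\<in>I. coeff \<alpha> n x i = 0"
  have "x = (\<Sum>j=1..n. coeff \<alpha> n x j *\<^sub>R \<alpha> j)"
    by (rule simple_expansion)
  also have "\<dots> = (\<Sum>j\<in>J. coeff \<alpha> n x j *\<^sub>R \<alpha> j)"
    using zero by (intro sum.mono_neutral_right) auto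
  also have "\<dots> \<in> span Pi_J"
    by (intro span_sum span_scale span_base) auto
  finally show "x \<in> span Pi_J" .
qed

lemma independent_simple_J: "independent Pi_J"
  using independent_simple by (rule independent_mono) auto

lemma card_simple_J: "card Pi_J = n - card I"
  using card_image[OF inj_on_subset[OF inj_on_simple, of J]] I_subset
  by (simp add: card_Diff_subset finite_subset)

text \<open>This is where the dimension of the face enters: translating \<open>V\<close> to the origin gives a set
  of dimension \<open>|J|\<close> inside \<open>span Pi_J\<close>.\<close>
lemma simple_J_subset_span_face: "Pi_J \<subseteq> span V"
proof -
  obtain v0 where v0: "v0 \<in> V" using face_vertices_nonempty by blast
  define D where "D = (\<lambda>x. x - v0) ` V"
  have "aff_dim V = int (dim D)"
    unfolding D_def using v0 by (intro aff_dim_eq_dim_subtract) (simp add: hull_inc)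
  then have "dim D = card Pi_J"
    using face_dim card_I card_simple_J by (simp add: aff_dim_convex_hull)
  moreover have "D \<subseteq> span Pi_J"
    using v0 by (auto simp: D_def span_simple_J_iff face_vertices_iff coeff_linear_simps)
  moreover have "dim (span Pi_J) = card Pi_J"
    using dim_span_eq_card_independent[OF independent_simple_J] by simp
  ultimately have "span D = span Pi_J"
    using dim_eq_span[of D "span Pi_J"] by simp
  moreover have "span D \<subseteq> span V"
    using v0 by (intro span_minimal[OF _ subspace_span]) (auto simp: D_def intro: span_diff span_base)
  ultimately have "span Pi_J \<subseteq> span V" by simp
  then show ?thesis using span_superset[of Pi_J] by (rule subset_trans[rotated])
qed

lemma span_face_iff: "x \<in> span V \<longleftrightarrow> (\<forall>i\<in>I. coeff \<alpha> n x i = level x * m i)"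
proof
  show "\<forall>i\<in>I. coeff \<alpha> n x i = level x * m i" if "x \<in> span V"
    using that
  proof (induction rule: span_induct_alt)
    case (step c x y)
    then show ?case
      using face_vertices_iff[of x] level_face_vertex[of x]
      by (simp add: coeff_linear_simps level_simps algebra_simps)
  qed (simp add: coeff_linear_simps level_def)
next
  assume proportional: "\<forall>i\<in>I. coeff \<alpha> n x i = level x * m i"
  obtain v0 where v0: "v0 \<in> V" using face_vertices_nonempty by blast
  have "x - level x *\<^sub>R v0 \<in> span Pi_J"
    using proportional v0 by (simp add: span_simple_J_iff face_vertices_iff coeff_linear_simps)
  then have "x - level x *\<^sub>R v0 \<in> span V"
    using span_mono[OF simple_J_subset_span_face] by (auto simp: span_span)
  moreover have "level x *\<^sub>R v0 \<in> span V"
    using v0 by (simp add: span_base span_scale)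
  ultimately show "x \<in> span V"
    using span_add by fastforce
qed

lemma level_S_set: "\<gamma> \<in> S_set \<Phi> \<alpha> n I b \<Longrightarrow> level \<gamma> = 1 / b"
  using i0_in_I hmult_i0_pos by (simp add: S_set_iff level_def)

lemma S_set_subset_span_face: "S_set \<Phi> \<alpha> n I b \<subseteq> span V"
proof
  fix \<gamma> assume \<gamma>: "\<gamma> \<in> S_set \<Phi> \<alpha> n I b"
  then show "\<gamma> \<in> span V" using level_S_set[OF \<gamma>] by (simp add: S_set_iff span_face_iff)
qed

lemma S_set_subset_pos_roots: "b > 0 \<Longrightarrow> S_set \<Phi> \<alpha> n I b \<subseteq> pos_roots \<Phi> \<alpha> n"
  using i0_in_I i0_range hmult_i0_pos by (auto simp: S_set_iff intro!: pos_rootsI)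

lemma S_set_level: "x \<in> span V \<Longrightarrow> x \<in> \<Phi> \<Longrightarrow> level x \<noteq> 0 \<Longrightarrow> x \<in> S_set \<Phi> \<alpha> n I (1 / level x)"
  by (simp add: S_set_iff span_face_iff)

lemma inverse_d_le_level:
  assumes "x \<in> span V" and "x \<in> \<Phi>" and "level x > 0"
  shows "1 / d \<le> level x"
proof -
  have "x \<in> S_set \<Phi> \<alpha> n I (1 / level x)"
    using S_set_level assms by simp
  then have "1 / level x \<le> d"
    using d_max[of "1 / level x"] assms(3) by auto
  then show ?thesis using assms(3) d_pos by (simp add: field_simps)
qed

lemma d_ge_1: "d \<ge> 1"
proof -
  obtain v0 where "v0 \<in> V" using face_vertices_nonempty by blast
  then have "v0 \<in> S_set \<Phi> \<alpha> n I 1"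
    using face_vertices_subset by (auto simp: S_set_iff face_vertices_iff)
  then show ?thesis using d_max[of 1] by auto
qed

section \<open>The subsystem generated by the vertices of the face\<close>

lemma gen_subsystem_face_subset: "gen_subsystem V \<subseteq> span V \<inter> \<Phi>"
proof (rule gen_subsystem_subset)
  show "V \<subseteq> span V \<inter> \<Phi>" using face_vertices_subset by (auto intro: span_base)
  fix \<gamma> x assume \<gamma>: "\<gamma> \<in> V" and x: "x \<in> span V \<inter> \<Phi>"
  have "reflect \<gamma> x \<in> \<Phi>"
    using \<gamma> x face_vertices_subset reflect_in_roots by blast
  moreover have "reflect \<gamma> x \<in> span V"
    unfolding reflect_def using \<gamma> x by (intro span_diff span_scale) (auto intro: span_base)
  ultimately show "reflect \<gamma> x \<in> span V \<inter> \<Phi>" by blast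
qed

lemma par_closure_face: "par_closure \<Phi> (gen_subsystem V) = span V \<inter> \<Phi>"
proof -
  have "span (gen_subsystem V) = span V"
    using gen_subsystem_face_subset subset_gen_subsystem[of V]
    by (metis Int_subset_iff span_mono span_span subset_antisym)
  then show ?thesis by (simp add: par_closure_def)
qed

text \<open>A reflection in a vertex changes the level by a Cartan integer.\<close>
lemma level_gen_subsystem_Ints: "x \<in> gen_subsystem V \<Longrightarrow> level x \<in> \<int>"
proof -
  have "gen_subsystem V \<subseteq> {y\<in>\<Phi>. level y \<in> \<int>}"
  proof (rule gen_subsystem_subset)
    show "V \<subseteq> {y\<in>\<Phi>. level y \<in> \<int>}"
      using face_vertices_subset level_face_vertex by auto
    fix \<gamma> y assume \<gamma>: "\<gamma> \<in> V" and y: "y \<in> {y\<in>\<Phi>. level y \<in> \<int>}"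
    have "level (reflect \<gamma> y) = level y - 2 * (y \<bullet> \<gamma>) / (\<gamma> \<bullet> \<gamma>)"
      using level_face_vertex[OF \<gamma>] by (simp add: reflect_def level_simps)
    moreover have "\<gamma> \<in> \<Phi>" using \<gamma> face_vertices_subset by blast
    ultimately show "reflect \<gamma> y \<in> {y\<in>\<Phi>. level y \<in> \<int>}"
      using y cartan_Ints reflect_in_roots by auto
  qed
  then show "x \<in> gen_subsystem V \<Longrightarrow> level x \<in> \<int>" by blast
qed

lemma d_eq_1_if_inverse_Ints: "1 / d \<in> \<int> \<Longrightarrow> d = 1"
  using Ints_eq_1_if_pos_le_1[of "1 / d"] d_ge_1 d_pos by simp

lemma d_eq_1_if_gen_subsystem_eq_par_closure:
  assumes "gen_subsystem V = par_closure \<Phi> (gen_subsystem V)"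
  shows "d = 1"
proof -
  obtain \<gamma> where \<gamma>: "\<gamma> \<in> S_set \<Phi> \<alpha> n I d" using S_d_nonempty by blast
  then have "\<gamma> \<in> span V \<inter> \<Phi>"
    using S_set_subset_span_face by (auto simp: S_set_def)
  then have "\<gamma> \<in> gen_subsystem V"
    using assms by (simp add: par_closure_face)
  then have "level \<gamma> \<in> \<int>"
    by (rule level_gen_subsystem_Ints)
  then show ?thesis
    using level_S_set[OF \<gamma>] d_eq_1_if_inverse_Ints by simp
qed

lemma d_eq_1_if_Gcd_hmult_eq_1:
  assumes "Gcd ((\<lambda>i. \<lfloor>m i\<rfloor>) ` I) = 1"
  shows "d = 1"
proof -
  obtain \<gamma> where \<gamma>: "\<gamma> \<in> S_set \<Phi> \<alpha> n I d" using S_d_nonempty by blast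
  have "(1 / d) * of_int a \<in> \<int>" if a: "a \<in> (\<lambda>i. \<lfloor>m i\<rfloor>) ` I" for a
  proof -
    obtain i where i: "i \<in> I" "a = \<lfloor>m i\<rfloor>" using a by blast
    obtain k :: nat where "m i = of_nat k"
      using hmult_Nats[of i] by (elim Nats_cases)
    then have "of_int a = m i" using i(2) by simp
    moreover have "coeff \<alpha> n \<gamma> i = m i / d" "\<gamma> \<in> \<Phi>"
      using \<gamma> i(1) by (auto simp: S_set_iff)
    then have "m i / d \<in> \<int>" using root_coeff_Ints by metis
    ultimately show ?thesis by simp
  qed
  then have "(1 / d) * of_int (Gcd ((\<lambda>i. \<lfloor>m i\<rfloor>) ` I)) \<in> \<int>"
    using finite_subset[OF I_subset] by (intro Ints_mult_Gcd) auto
  then show ?thesis using assms d_eq_1_if_inverse_Ints by simp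
qed

context
  assumes d_eq_1: "d = 1"
begin

lemma level_span_face_root:
  assumes "x \<in> span V" and "x \<in> \<Phi>"
  shows "level x \<in> {-1, 0, 1}"
proof -
  have "level y = 0 \<or> level y = 1" if "y \<in> span V" "y \<in> pos_roots \<Phi> \<alpha> n" for y
    using that level_nonneg level_le_1 inverse_d_le_level[OF that(1) pos_root_in_roots] d_eq_1
    by force
  moreover have "- x \<in> span V" using assms(1) by (rule span_neg)
  ultimately show ?thesis
    using pos_roots_or_uminus[OF assms(2)] assms(1) by (force simp: level_simps)
qed

lemma face_vertex_if_level_1:
  assumes "x \<in> span V" and "x \<in> \<Phi>" and "level x = 1"
  shows "x \<in> V"
proof -
  have "coeff \<alpha> n x i0 > 0"
    using assms(3) hmult_i0_pos by (simp add: level_def)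
  then have "x \<in> pos_roots \<Phi> \<alpha> n"
    using pos_rootsI[OF assms(2) i0_range] by blast
  then show ?thesis
    using assms(1,3) by (simp add: face_vertices_iff span_face_iff)
qed

lemma gen_subsystem_if_level_pm1:
  assumes "x \<in> span V" and "x \<in> \<Phi>" and "level x = 1 \<or> level x = -1"
  shows "x \<in> gen_subsystem V"
  using assms(3)
proof
  assume "level x = 1"
  then show ?thesis using face_vertex_if_level_1 assms subset_gen_subsystem by blast
next
  assume "level x = -1"
  then have "- x \<in> V"
    using face_vertex_if_level_1[OF span_neg[OF assms(1)] uminus_in_roots[OF assms(2)]]
    by (simp add: level_simps)
  then show ?thesis
    using uminus_in_gen_subsystem[of "- x" V] assms(2) root_nonzero by force
qed

text \<open>As \<open>x\<close> is a nonzero vector of \<open>span V\<close>, some vertex \<open>\<gamma>\<close> is not orthogonal to \<open>x\<close>; the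
  reflection of \<open>x\<close> in \<open>\<gamma>\<close> then has the nonzero integral level \<open>-c\<close>, where \<open>c\<close> is the Cartan
  integer, so it is \<open>\<plusminus>1\<close>.\<close>
lemma gen_subsystem_if_level_0:
  assumes x: "x \<in> span V" "x \<in> \<Phi>" and "level x = 0"
  shows "x \<in> gen_subsystem V"
proof -
  obtain \<gamma> where \<gamma>: "\<gamma> \<in> V" "x \<bullet> \<gamma> \<noteq> 0"
  proof (rule ccontr)
    assume "\<not> thesis"
    then have "x \<bullet> x = 0"
      using that orthogonal_to_span[OF x(1), of x] by (auto simp: orthogonal_def inner_commute)
    then show False using root_nonzero[OF x(2)] by simp
  qed
  have \<gamma>R: "\<gamma> \<in> \<Phi>" using \<gamma>(1) face_vertices_subset by blast
  define c where "c = 2 * (x \<bullet> \<gamma>) / (\<gamma> \<bullet> \<gamma>)"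
  define \<eta> where "\<eta> = reflect \<gamma> x"
  have \<eta>: "\<eta> = x - c *\<^sub>R \<gamma>" by (simp add: \<eta>_def reflect_def c_def)
  have \<eta>R: "\<eta> \<in> \<Phi>" using reflect_in_roots[OF \<gamma>R x(2)] by (simp add: \<eta>_def)
  have "\<eta> \<in> span V" using \<eta> x \<gamma> by (simp add: span_diff span_scale span_base)
  moreover have "level \<eta> = - c"
    using \<eta> \<open>level x = 0\<close> level_face_vertex[OF \<gamma>(1)] by (simp add: level_simps)
  moreover have "c \<noteq> 0" using \<gamma> root_nonzero[OF \<gamma>R] by (simp add: c_def)
  ultimately have "\<eta> \<in> gen_subsystem V"
    using level_span_face_root[of \<eta>] \<eta>R by (intro gen_subsystem_if_level_pm1) auto
  moreover have "x = reflect \<gamma> \<eta>"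
    using reflect_reflect[OF root_nonzero[OF \<gamma>R]] by (simp add: \<eta>_def)
  ultimately show ?thesis using reflect_in_gen_subsystem[OF \<gamma>(1)] by simp
qed

lemma span_face_roots_subset_gen_subsystem: "span V \<inter> \<Phi> \<subseteq> gen_subsystem V"
  using level_span_face_root gen_subsystem_if_level_0 gen_subsystem_if_level_pm1 by blast

end

lemma gen_subsystem_eq_par_closure_iff: "gen_subsystem V = par_closure \<Phi> (gen_subsystem V) \<longleftrightarrow> d = 1"
  using d_eq_1_if_gen_subsystem_eq_par_closure span_face_roots_subset_gen_subsystem
    gen_subsystem_face_subset par_closure_face by blast

section \<open>A root basis of the parabolic closure\<close>

definition pos_span_roots :: "'a set" where
  "pos_span_roots = span V \<inter> pos_roots \<Phi> \<alpha> n"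

definition indecomposables :: "'a set" where
  "indecomposables = {x\<in>pos_span_roots. \<not> (\<exists>y\<in>pos_span_roots. \<exists>z\<in>pos_span_roots. x = y + z)}"

lemma indecomposables_subset: "indecomposables \<subseteq> pos_span_roots"
  by (auto simp: indecomposables_def)

lemma finite_indecomposables: "finite indecomposables"
proof -
  have "indecomposables \<subseteq> \<Phi>"
    using indecomposables_subset by (auto simp: pos_span_roots_def pos_roots_def)
  then show ?thesis using finite_roots by (rule finite_subset)
qed

lemma indecomposables_generate:
  assumes "x \<in> pos_span_roots"
  shows "\<exists>k. (\<forall>e\<in>indecomposables. k e \<in> \<nat>) \<and> x = (\<Sum>e\<in>indecomposables. k e *\<^sub>R e)"
proof -
  have "x \<in> pos_roots \<Phi> \<alpha> n" using assms by (simp add: pos_span_roots_def)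
  then show ?thesis
    using assms
  proof (induction rule: pos_root_height_induct)
    case (less x)
    show ?case
    proof (cases "x \<in> indecomposables")
      case True
      then show ?thesis
        using finite_indecomposables
        by (intro exI[of _ "\<lambda>e. if e = x then 1 else 0"])
          (simp add: if_distrib[of "\<lambda>c. c *\<^sub>R _"] sum.delta cong: if_cong)
    next
      case False
      then obtain y z where yz: "y \<in> pos_span_roots" "z \<in> pos_span_roots" "x = y + z"
        using less.prems by (auto simp: indecomposables_def)
      have pos: "y \<in> pos_roots \<Phi> \<alpha> n" "z \<in> pos_roots \<Phi> \<alpha> n"
        using yz by (auto simp: pos_span_roots_def)
      then have "height y \<ge> 1" "height z \<ge> 1" "height x = height y + height z"
        using height_pos_root_ge_1 yz(3) by (auto simp: height_simps)
      then have "height y < height x" "height z < height x" by simp_all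
      then obtain ky kz
        where "\<forall>e\<in>indecomposables. ky e \<in> \<nat>" "y = (\<Sum>e\<in>indecomposables. ky e *\<^sub>R e)"
          and "\<forall>e\<in>indecomposables. kz e \<in> \<nat>" "z = (\<Sum>e\<in>indecomposables. kz e *\<^sub>R e)"
        using less.IH[OF pos(1) _ yz(1)] less.IH[OF pos(2) _ yz(2)] by blast
      then show ?thesis
        using yz(3) by (intro exI[of _ "\<lambda>e. ky e + kz e"]) (simp add: scaleR_add_left sum.distrib)
    qed
  qed
qed

lemma indecomposables_obtuse:
  assumes e: "e1 \<in> indecomposables" "e2 \<in> indecomposables" "e1 \<noteq> e2"
  shows "e1 \<bullet> e2 \<le> 0"
proof (rule ccontr)
  assume "\<not> e1 \<bullet> e2 \<le> 0"
  have P: "e1 \<in> pos_span_roots" "e2 \<in> pos_span_roots"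
    using e indecomposables_subset by auto
  then have "e1 - e2 \<in> \<Phi>"
    using diff_in_roots \<open>\<not> e1 \<bullet> e2 \<le> 0\<close> e(3) by (auto simp: pos_span_roots_def pos_roots_def)
  moreover have "e1 - e2 \<in> span V" "e2 - e1 \<in> span V"
    using P by (auto simp: pos_span_roots_def intro: span_diff)
  ultimately have "e1 - e2 \<in> pos_span_roots \<or> e2 - e1 \<in> pos_span_roots"
    using pos_roots_or_uminus by (force simp: pos_span_roots_def)
  then show False
  proof
    assume "e1 - e2 \<in> pos_span_roots"
    then show False using e(1) P(2) by (force simp: indecomposables_def)
  next
    assume "e2 - e1 \<in> pos_span_roots"
    then show False using e(2) P(1) by (force simp: indecomposables_def)
  qed
qed

lemma independent_indecomposables: "independent indecomposables"
  using finite_indecomposables linear_height height_pos_root_ge_1 indecomposables_obtuse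
    indecomposables_subset
  by (intro independent_if_pairwise_obtuse[where f = height])
    (force simp: pos_span_roots_def)+

lemma simple_J_subset_indecomposables: "Pi_J \<subseteq> indecomposables"
proof
  fix x assume "x \<in> Pi_J"
  then obtain j where j: "j \<in> {1..n}" "x = \<alpha> j" by auto
  have "x \<in> pos_span_roots"
    using \<open>x \<in> Pi_J\<close> simple_J_subset_span_face simple_in_pos_roots j
    by (auto simp: pos_span_roots_def)
  moreover have "x \<noteq> y + z" if "y \<in> pos_span_roots" "z \<in> pos_span_roots" for y z
  proof
    assume "x = y + z"
    then have "height y + height z = 1"
      using height_simple[OF j(1)] j(2) by (simp add: height_simps)
    moreover have "height y \<ge> 1" "height z \<ge> 1"
      using that height_pos_root_ge_1 by (auto simp: pos_span_roots_def)
    ultimately show False by simp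
  qed
  ultimately show "x \<in> indecomposables" by (auto simp: indecomposables_def)
qed

lemma card_indecomposables_le: "card indecomposables \<le> n - card I + 1"
proof -
  obtain v0 where v0: "v0 \<in> V" using face_vertices_nonempty by blast
  have "V \<subseteq> span (insert v0 Pi_J)"
  proof
    fix v assume "v \<in> V"
    then have "v - v0 \<in> span Pi_J"
      using v0 by (simp add: span_simple_J_iff face_vertices_iff coeff_linear_simps)
    then have "(v - v0) + v0 \<in> span (insert v0 Pi_J)"
      by (meson span_add span_base insertI1 span_mono subset_insertI subsetD)
    then show "v \<in> span (insert v0 Pi_J)" by simp
  qed
  then have "span V \<subseteq> span (insert v0 Pi_J)"
    by (rule span_minimal[OF _ subspace_span])
  then have "dim (span V) \<le> card (insert v0 Pi_J)"
    by (rule dim_le_card) simp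
  also have "\<dots> \<le> n - card I + 1"
    using card_simple_J by (simp add: card_insert_if)
  finally show ?thesis
    using independent_card_le_dim[OF _ independent_indecomposables, of "span V"]
      indecomposables_subset by (auto simp: pos_span_roots_def)
qed

lemma ex_indecomposable_notin_simple_J: "\<exists>\<beta>\<in>indecomposables. \<beta> \<notin> Pi_J"
proof (rule ccontr)
  assume none: "\<not> (\<exists>\<beta>\<in>indecomposables. \<beta> \<notin> Pi_J)"
  obtain v0 where v0: "v0 \<in> V" using face_vertices_nonempty by blast
  then have "v0 \<in> pos_span_roots"
    by (auto simp: pos_span_roots_def face_vertices_iff span_base)
  then obtain k where "v0 = (\<Sum>e\<in>indecomposables. k e *\<^sub>R e)"
    using indecomposables_generate by blast
  then have "v0 \<in> span indecomposables"
    by (simp add: span_base span_scale span_sum)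
  then have "v0 \<in> span Pi_J"
    using none span_mono[of indecomposables Pi_J] by blast
  then show False
    using v0 i0_in_I hmult_i0_pos by (auto simp: span_simple_J_iff face_vertices_iff)
qed

lemma indecomposables_eq_insert:
  assumes "\<beta> \<in> indecomposables" and "\<beta> \<notin> Pi_J"
  shows "indecomposables = insert \<beta> Pi_J"
proof (rule ccontr)
  assume "indecomposables \<noteq> insert \<beta> Pi_J"
  then obtain \<beta>' where \<beta>': "\<beta>' \<in> indecomposables" "\<beta>' \<notin> Pi_J" "\<beta>' \<noteq> \<beta>"
    using assms simple_J_subset_indecomposables by blast
  have "card (insert \<beta> (insert \<beta>' Pi_J)) \<le> card indecomposables"
    using assms \<beta>' simple_J_subset_indecomposables finite_indecomposables
    by (intro card_mono) auto
  moreover have "card (insert \<beta> (insert \<beta>' Pi_J)) = n - card I + 2"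
    using assms \<beta>' card_simple_J by simp
  ultimately show False using card_indecomposables_le by simp
qed

context
  fixes \<beta> assumes \<beta>: "\<beta> \<in> indecomposables" "\<beta> \<notin> Pi_J"
begin

lemma level_indecomposable_sum:
  "level (\<Sum>e\<in>indecomposables. k e *\<^sub>R e) = k \<beta> * level \<beta>"
proof -
  have "level (\<Sum>e\<in>indecomposables. k e *\<^sub>R e) = k \<beta> * level \<beta> + (\<Sum>e\<in>Pi_J. k e * level e)"
    using indecomposables_eq_insert[OF \<beta>] \<beta>(2) by (simp add: level_simps)
  also have "(\<Sum>e\<in>Pi_J. k e * level e) = 0"
    using level_simple_J by (intro sum.neutral) auto
  finally show ?thesis by simp
qed

text \<open>The level of \<open>\<beta>\<close> is at least \<open>1/d\<close>, while every element of \<open>S_d\<close> (of level \<open>1/d\<close>) is a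
  combination of indecomposables with a positive integer coefficient at \<open>\<beta>\<close>.\<close>
lemma level_extra_indecomposable: "level \<beta> = 1 / d"
proof -
  have \<beta>P: "\<beta> \<in> pos_span_roots" using \<beta> indecomposables_subset by blast
  have "level \<beta> \<noteq> 0"
  proof
    assume "level \<beta> = 0"
    then have "\<beta> \<in> span Pi_J"
      using \<beta>P by (simp add: pos_span_roots_def span_face_iff span_simple_J_iff)
    then have "dependent indecomposables"
      using indecomposables_eq_insert[OF \<beta>] \<beta>(2) unfolding dependent_def
      by (metis Diff_insert_absorb insertI1)
    then show False using independent_indecomposables by simp
  qed
  then have pos: "level \<beta> > 0"
    using level_nonneg \<beta>P by (force simp: pos_span_roots_def)
  then have lower: "1 / d \<le> level \<beta>"
    using \<beta>P by (intro inverse_d_le_level) (auto simp: pos_span_roots_def pos_root_in_roots)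
  obtain \<gamma> where \<gamma>: "\<gamma> \<in> S_set \<Phi> \<alpha> n I d" using S_d_nonempty by blast
  then have "\<gamma> \<in> pos_span_roots"
    using S_set_subset_span_face S_set_subset_pos_roots[OF d_pos] by (auto simp: pos_span_roots_def)
  then obtain k where k: "\<forall>e\<in>indecomposables. k e \<in> \<nat>" "\<gamma> = (\<Sum>e\<in>indecomposables. k e *\<^sub>R e)"
    using indecomposables_generate by blast
  have eq: "k \<beta> * level \<beta> = 1 / d"
    using level_S_set[OF \<gamma>] level_indecomposable_sum k(2) by simp
  have "k \<beta> \<in> \<nat>" using k(1) \<beta>(1) by blast
  moreover have "k \<beta> \<noteq> 0" using eq d_pos by auto
  ultimately have "k \<beta> \<ge> 1" by (auto elim!: Nats_cases)
  then have "level \<beta> \<le> k \<beta> * level \<beta>"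
    using pos by (simp add: mult_le_cancel_right1)
  then have "level \<beta> \<le> 1 / d" using eq by simp
  then show ?thesis using lower by simp
qed

lemma extra_indecomposable_in_S_set: "\<beta> \<in> S_set \<Phi> \<alpha> n I d"
  using \<beta> indecomposables_subset level_extra_indecomposable
  by (auto simp: S_set_iff pos_span_roots_def span_face_iff pos_root_in_roots)

lemma extra_indecomposable_le_S_set:
  assumes \<gamma>: "\<gamma> \<in> S_set \<Phi> \<alpha> n I d"
  shows "root_le \<alpha> n \<beta> \<gamma>"
proof -
  have "\<gamma> \<in> pos_span_roots"
    using \<gamma> S_set_subset_span_face S_set_subset_pos_roots[OF d_pos] by (auto simp: pos_span_roots_def)
  then obtain k where k: "\<forall>e\<in>indecomposables. k e \<in> \<nat>" "\<gamma> = (\<Sum>e\<in>indecomposables. k e *\<^sub>R e)"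
    using indecomposables_generate by blast
  have "k \<beta> = 1"
    using level_S_set[OF \<gamma>] level_indecomposable_sum[of k] k(2) level_extra_indecomposable d_pos
    by simp
  then have diff: "\<gamma> - \<beta> = (\<Sum>e\<in>Pi_J. k e *\<^sub>R e)"
    using k(2) indecomposables_eq_insert[OF \<beta>] \<beta>(2) by simp
  have "coeff \<alpha> n \<gamma> i - coeff \<alpha> n \<beta> i = (\<Sum>e\<in>Pi_J. k e * coeff \<alpha> n e i)" for i
  proof -
    have "coeff \<alpha> n \<gamma> i - coeff \<alpha> n \<beta> i = coeff \<alpha> n (\<gamma> - \<beta>) i"
      by (simp add: coeff_linear_simps)
    also have "\<dots> = (\<Sum>e\<in>Pi_J. k e * coeff \<alpha> n e i)"
      unfolding diff by (simp add: coeff_linear_simps)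
    finally show ?thesis .
  qed
  moreover have "(\<Sum>e\<in>Pi_J. k e * coeff \<alpha> n e i) \<in> \<nat>" for i
    using k(1) simple_J_subset_indecomposables by (intro Nats_sum) (auto simp: coeff_simple)
  ultimately show ?thesis by (simp add: root_le_def)
qed

end

lemma is_root_basis_indecomposables: "is_root_basis (span V \<inter> \<Phi>) indecomposables"
  unfolding is_root_basis_def
proof (intro conjI ballI)
  show "indecomposables \<subseteq> span V \<inter> \<Phi>"
    using indecomposables_subset by (auto simp: pos_span_roots_def pos_roots_def)
  show "independent indecomposables" by (rule independent_indecomposables)
  fix \<psi> assume \<psi>: "\<psi> \<in> span V \<inter> \<Phi>"
  then have "\<psi> \<in> pos_span_roots \<or> - \<psi> \<in> pos_span_roots"
    using pos_roots_or_uminus span_neg by (auto simp: pos_span_roots_def)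
  then show "\<exists>c. (\<forall>b\<in>indecomposables. c b \<in> \<int>) \<and>
      ((\<forall>b\<in>indecomposables. 0 \<le> c b) \<or> (\<forall>b\<in>indecomposables. c b \<le> 0)) \<and>
      \<psi> = (\<Sum>b\<in>indecomposables. c b *\<^sub>R b)"
  proof
    assume "\<psi> \<in> pos_span_roots"
    then obtain k where "\<forall>e\<in>indecomposables. k e \<in> \<nat>" "\<psi> = (\<Sum>e\<in>indecomposables. k e *\<^sub>R e)"
      using indecomposables_generate by blast
    then show ?thesis
      by (intro exI[of _ k]) (auto simp: Nats_altdef2)
  next
    assume "- \<psi> \<in> pos_span_roots"
    then obtain k where k: "\<forall>e\<in>indecomposables. k e \<in> \<nat>"
      and sum: "- \<psi> = (\<Sum>e\<in>indecomposables. k e *\<^sub>R e)"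
      using indecomposables_generate by blast
    from sum have "\<psi> = - (\<Sum>e\<in>indecomposables. k e *\<^sub>R e)"
      by (metis minus_minus)
    also have "\<dots> = (\<Sum>e\<in>indecomposables. (- k e) *\<^sub>R e)"
      by (simp add: sum_negf)
    finally show ?thesis
      using k by (intro exI[of _ "\<lambda>e. - k e"]) (auto simp: Nats_altdef2)
  qed
qed

lemma min_S_set_root_basis:
  "\<exists>a\<in>S_set \<Phi> \<alpha> n I d. (\<forall>\<gamma>\<in>S_set \<Phi> \<alpha> n I d. root_le \<alpha> n a \<gamma>) \<and>
     is_root_basis (par_closure \<Phi> (gen_subsystem V)) (insert a Pi_J)"
proof -
  obtain \<beta> where \<beta>: "\<beta> \<in> indecomposables" "\<beta> \<notin> Pi_J"
    using ex_indecomposable_notin_simple_J by blast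
  show ?thesis
    using extra_indecomposable_in_S_set[OF \<beta>] extra_indecomposable_le_S_set[OF \<beta>]
      is_root_basis_indecomposables indecomposables_eq_insert[OF \<beta>]
    by (auto simp: par_closure_face)
qed

end

theorem lemma3p3:
  fixes \<Phi> :: "'a::euclidean_space set" and \<alpha> :: "nat \<Rightarrow> 'a" and n :: nat
    and I :: "nat set" and d :: real
  assumes "crystallographic_root_system \<Phi>"
    and "irreducible_root_system \<Phi>"
    and "simple_roots \<Phi> \<alpha> n"
    and "I \<subseteq> {1..n}"
    and "aff_dim (convex hull (face_vertices \<Phi> \<alpha> n I)) = int n - int (card I)"
    and "d > 0"
    and "S_set \<Phi> \<alpha> n I d \<noteq> {}"
    and "\<forall>b>0. S_set \<Phi> \<alpha> n I b \<noteq> {} \<longrightarrow> b \<le> d"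
  shows "(\<exists>a\<in>S_set \<Phi> \<alpha> n I d. (\<forall>\<gamma>\<in>S_set \<Phi> \<alpha> n I d. root_le \<alpha> n a \<gamma>) \<and>
            is_root_basis (par_closure \<Phi> (gen_subsystem (face_vertices \<Phi> \<alpha> n I)))
                          (insert a (\<alpha> ` ({1..n} - I))))
       \<and> (gen_subsystem (face_vertices \<Phi> \<alpha> n I)
             = par_closure \<Phi> (gen_subsystem (face_vertices \<Phi> \<alpha> n I)) \<longleftrightarrow> d = 1)
       \<and> (Gcd ((\<lambda>i. \<lfloor>hmult \<Phi> \<alpha> n i\<rfloor>) ` I) = 1 \<longrightarrow>
            gen_subsystem (face_vertices \<Phi> \<alpha> n I)
             = par_closure \<Phi> (gen_subsystem (face_vertices \<Phi> \<alpha> n I)))"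
proof -
  interpret root_system_face \<Phi> \<alpha> n I d
    using assms by unfold_locales auto
  show ?thesis
    using min_S_set_root_basis gen_subsystem_eq_par_closure_iff d_eq_1_if_Gcd_hmult_eq_1 by blast
qed

end
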